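(* Under the assumptions of Theorem 2 (unichain and strictly indexable bandit; the unique fixed point $\mathbf m^*$ of $\phi$ is a uniform global attractor of $(\Phi_t)$; $\mathbf m^*$ non-singular), let $\mathbf M^{(N)}(0)$ be distributed according to a stationary distribution of the configuration Markov chain of the $N$-bandit system under WIP ($\alpha N\in\mathbb N$). Then there exist constants $b,c>0$, independent of $N$, such that (i) $\|\mathbb E[\mathbf M^{(N)}(0)]-\mathbf m^*\|\le b\,e^{-cN}$, and (ii) $\mathbb P(\mathbf M^{(N)}(0)\notin\mathcal Z_{s(\mathbf m^* )})\le b\,e^{-cN}$.
   Context: Synchronous restless bandit model: $d\times d$ stochastic matrices $\mathbf P^0,\mathbf P^1$, rewards $\mathbf R^0,\mathbf R^1$, $\alpha\in(0,1)$; $N$ bandits with states in $\{1,\dots,d\}$ moving independently given actions, $\mathbb P(S_n(t+1)=j\mid S_n(t)=i,a_n(t)=a)=P^a_{ij}$. Strict indexability (Whittle indices from the single-bandit subsidy-$\nu$ problem where the passive action earns $R^0_i+\nu$, nested passive sets, pairwise distinct indices) is assumed, states labeled $\nu_1>\dots>\nu_d$; unichain: every policy gives a single recurrent class. WIP activates at each step the $\alpha N$ bandits with highest indices; $\mathbf M^{(N)}(t)\in\Delta^d=\{\mathbf m\in[0,1]^d:\sum m_i=1\}$ is the vector of fractions of bandits in each state under WIP, a Markov chain. $s(\mathbf m)$ is the unique $s$ with $\sum_{i<s}m_i\le\alpha<\sum_{i\le s}m_i$; $\mathcal Z_i=\{\mathbf m\in\Delta^d:s(\mathbf m)=i\}$;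 $\phi_j(\mathbf m)=\sum_{i=1}^{s(\mathbf m)-1} m_i P^1_{ij} + (\alpha-\sum_{i=1}^{s(\mathbf m)-1}m_i)P^1_{s(\mathbf m)j} + (\sum_{i=1}^{s(\mathbf m)}m_i - \alpha)P^0_{s(\mathbf m)j} + \sum_{i=s(\mathbf m)+1}^{d} m_i P^0_{ij}$ with unique fixed point $\mathbf m^*$; $\Phi_0=\mathrm{id}$, $\Phi_{t+1}=\phi\circ\Phi_t$. Uniform global attractor: for all $\epsilon>0$ there is $T(\epsilon)$ with $\|\Phi_t(\mathbf m)-\mathbf m^*\|\le\epsilon$ for $t\ge T(\epsilon)$ and all $\mathbf m$. Singular: $\sum_{j\le i}m_j=\alpha$ for some $i$. $\|\cdot\|$ sup norm. *)

theory Defs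
  imports "HOL-Probability.Probability"
begin

text \<open>States are labelled 1..d. Matrices and rewards are functions on nat,
  only their values on {1..d} matter. Action: True = active (P1,R1), False = passive.\<close>

definition stochastic :: "nat \<Rightarrow> (nat \<Rightarrow> nat \<Rightarrow> real) \<Rightarrow> bool" where
  "stochastic d P \<longleftrightarrow> (\<forall>i\<in>{1..d}. (\<forall>j\<in>{1..d}. 0 \<le> P i j) \<and> (\<Sum>j=1..d. P i j) = 1)"

definition policy_matrix :: "(nat \<Rightarrow> nat \<Rightarrow> real) \<Rightarrow> (nat \<Rightarrow> nat \<Rightarrow> real) \<Rightarrow> (nat \<Rightarrow> bool)
    \<Rightarrow> nat \<Rightarrow> nat \<Rightarrow> real" where
  "policy_matrix P0 P1 \<pi> i j = (if \<pi> i then P1 i j else P0 i j)"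

definition reach :: "nat \<Rightarrow> (nat \<Rightarrow> nat \<Rightarrow> real) \<Rightarrow> nat \<Rightarrow> nat \<Rightarrow> bool" where
  "reach d Q i j \<longleftrightarrow> (i, j) \<in> {(x, y). x \<in> {1..d} \<and> y \<in> {1..d} \<and> Q x y > 0}\<^sup>*"

definition recurrent_state :: "nat \<Rightarrow> (nat \<Rightarrow> nat \<Rightarrow> real) \<Rightarrow> nat \<Rightarrow> bool" where
  "recurrent_state d Q i \<longleftrightarrow> i \<in> {1..d} \<and> (\<forall>j. reach d Q i j \<longrightarrow> reach d Q j i)"

definition single_recurrent_class :: "nat \<Rightarrow> (nat \<Rightarrow> nat \<Rightarrow> real) \<Rightarrow> bool" where
  "single_recurrent_class d Q \<longleftrightarrow> (\<exists>i. recurrent_state d Q i) \<and>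
     (\<forall>i j. recurrent_state d Q i \<and> recurrent_state d Q j \<longrightarrow> reach d Q i j)"

definition unichain :: "nat \<Rightarrow> (nat \<Rightarrow> nat \<Rightarrow> real) \<Rightarrow> (nat \<Rightarrow> nat \<Rightarrow> real) \<Rightarrow> bool" where
  "unichain d P0 P1 \<longleftrightarrow> (\<forall>\<pi>. single_recurrent_class d (policy_matrix P0 P1 \<pi>))"

definition bellman :: "nat \<Rightarrow> (nat \<Rightarrow> nat \<Rightarrow> real) \<Rightarrow> (nat \<Rightarrow> nat \<Rightarrow> real) \<Rightarrow> (nat \<Rightarrow> real)
    \<Rightarrow> (nat \<Rightarrow> real) \<Rightarrow> real \<Rightarrow> real \<Rightarrow> (nat \<Rightarrow> real) \<Rightarrow> bool" where
  "bellman d P0 P1 R0 R1 \<nu> g h \<longleftrightarrow> (\<forall>i\<in>{1..d}.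
      g + h i = max (R0 i + \<nu> + (\<Sum>j=1..d. P0 i j * h j)) (R1 i + (\<Sum>j=1..d. P1 i j * h j)))"

definition passive_set :: "nat \<Rightarrow> (nat \<Rightarrow> nat \<Rightarrow> real) \<Rightarrow> (nat \<Rightarrow> nat \<Rightarrow> real) \<Rightarrow> (nat \<Rightarrow> real)
    \<Rightarrow> (nat \<Rightarrow> real) \<Rightarrow> real \<Rightarrow> nat set" where
  "passive_set d P0 P1 R0 R1 \<nu> = {i\<in>{1..d}. \<exists>g h. bellman d P0 P1 R0 R1 \<nu> g h \<and>
      R0 i + \<nu> + (\<Sum>j=1..d. P0 i j * h j) \<ge> R1 i + (\<Sum>j=1..d. P1 i j * h j)}"

definition whittle_index :: "nat \<Rightarrow> (nat \<Rightarrow> nat \<Rightarrow> real) \<Rightarrow> (nat \<Rightarrow> nat \<Rightarrow> real) \<Rightarrow> (nat \<Rightarrow> real)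
    \<Rightarrow> (nat \<Rightarrow> real) \<Rightarrow> nat \<Rightarrow> real" where
  "whittle_index d P0 P1 R0 R1 i = Inf {\<nu>. i \<in> passive_set d P0 P1 R0 R1 \<nu>}"

definition strictly_indexable_sorted :: "nat \<Rightarrow> (nat \<Rightarrow> nat \<Rightarrow> real) \<Rightarrow> (nat \<Rightarrow> nat \<Rightarrow> real)
    \<Rightarrow> (nat \<Rightarrow> real) \<Rightarrow> (nat \<Rightarrow> real) \<Rightarrow> bool" where
  "strictly_indexable_sorted d P0 P1 R0 R1 \<longleftrightarrow>
     (\<forall>\<nu> \<nu>'. \<nu> \<le> \<nu>' \<longrightarrow> passive_set d P0 P1 R0 R1 \<nu> \<subseteq> passive_set d P0 P1 R0 R1 \<nu>') \<and>
     (\<forall>i\<in>{1..d}. \<forall>j\<in>{1..d}. i < j \<longrightarrow> whittle_index d P0 P1 R0 R1 i > whittle_index d P0 P1 R0 R1 j)"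

definition simplex_d :: "nat \<Rightarrow> (nat \<Rightarrow> real) set" where
  "simplex_d d = {m. (\<forall>i\<in>{1..d}. 0 \<le> m i \<and> m i \<le> 1) \<and> (\<Sum>i=1..d. m i) = 1}"

definition s_of :: "nat \<Rightarrow> real \<Rightarrow> (nat \<Rightarrow> real) \<Rightarrow> nat" where
  "s_of d \<alpha> m = (THE s. s \<in> {1..d} \<and> (\<Sum>i\<in>{1..<s}. m i) \<le> \<alpha> \<and> \<alpha> < (\<Sum>i\<in>{1..s}. m i))"

definition Z :: "nat \<Rightarrow> real \<Rightarrow> nat \<Rightarrow> (nat \<Rightarrow> real) set" where
  "Z d \<alpha> i = {m \<in> simplex_d d. s_of d \<alpha> m = i}"

definition phi :: "nat \<Rightarrow> (nat \<Rightarrow> nat \<Rightarrow> real) \<Rightarrow> (nat \<Rightarrow> nat \<Rightarrow> real) \<Rightarrow> real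
    \<Rightarrow> (nat \<Rightarrow> real) \<Rightarrow> nat \<Rightarrow> real" where
  "phi d P0 P1 \<alpha> m j = (let s = s_of d \<alpha> m in
      (\<Sum>i\<in>{1..<s}. m i * P1 i j)
      + (\<alpha> - (\<Sum>i\<in>{1..<s}. m i)) * P1 s j
      + ((\<Sum>i\<in>{1..s}. m i) - \<alpha>) * P0 s j
      + (\<Sum>i\<in>{s<..d}. m i * P0 i j))"

definition singular :: "nat \<Rightarrow> real \<Rightarrow> (nat \<Rightarrow> real) \<Rightarrow> bool" where
  "singular d \<alpha> m \<longleftrightarrow> (\<exists>i\<in>{1..d}. (\<Sum>j\<in>{1..i}. m j) = \<alpha>)"

definition uniform_global_attractor :: "nat \<Rightarrow> ((nat \<Rightarrow> real) \<Rightarrow> (nat \<Rightarrow> real)) \<Rightarrow> (nat \<Rightarrow> real) \<Rightarrow> bool" where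
  "uniform_global_attractor d f mstar \<longleftrightarrow>
     (\<forall>\<epsilon>>0. \<exists>T. \<forall>t\<ge>T. \<forall>m\<in>simplex_d d. \<forall>i\<in>{1..d}. \<bar>(f ^^ t) m i - mstar i\<bar> \<le> \<epsilon>)"

definition row_pmf :: "nat \<Rightarrow> (nat \<Rightarrow> nat \<Rightarrow> real) \<Rightarrow> nat \<Rightarrow> nat pmf" where
  "row_pmf d P i = embed_pmf (\<lambda>j. if j \<in> {1..d} then P i j else 0)"

fun sample_counts :: "nat \<Rightarrow> nat pmf \<Rightarrow> (nat \<Rightarrow> nat) pmf" where
  "sample_counts 0 p = return_pmf (\<lambda>_. 0)"
| "sample_counts (Suc k) p = bind_pmf (sample_counts k p) (\<lambda>c. map_pmf (\<lambda>j. c(j := c j + 1)) p)"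

definition add_counts :: "(nat \<Rightarrow> nat) pmf \<Rightarrow> (nat \<Rightarrow> nat) pmf \<Rightarrow> (nat \<Rightarrow> nat) pmf" where
  "add_counts p q = bind_pmf p (\<lambda>x. map_pmf (\<lambda>y j. x j + y j) q)"

text \<open>Number of activated bandits in state i when A bandits with highest indices are activated.\<close>
definition n_active :: "nat \<Rightarrow> (nat \<Rightarrow> nat) \<Rightarrow> nat \<Rightarrow> nat" where
  "n_active A n i = min (n i) (A - (\<Sum>j\<in>{1..<i}. n j))"

definition wip_step :: "nat \<Rightarrow> (nat \<Rightarrow> nat \<Rightarrow> real) \<Rightarrow> (nat \<Rightarrow> nat \<Rightarrow> real) \<Rightarrow> nat
    \<Rightarrow> (nat \<Rightarrow> nat) \<Rightarrow> (nat \<Rightarrow> nat) pmf" where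
  "wip_step d P0 P1 A n = foldr (\<lambda>i acc. add_counts acc
       (add_counts (sample_counts (n_active A n i) (row_pmf d P1 i))
                   (sample_counts (n i - n_active A n i) (row_pmf d P0 i))))
     [1..<d+1] (return_pmf (\<lambda>_. 0))"

definition config_space :: "nat \<Rightarrow> nat \<Rightarrow> (nat \<Rightarrow> nat) set" where
  "config_space d N = {n. (\<forall>i. i \<notin> {1..d} \<longrightarrow> n i = 0) \<and> (\<Sum>i=1..d. n i) = N}"

definition stationary_wip :: "nat \<Rightarrow> (nat \<Rightarrow> nat \<Rightarrow> real) \<Rightarrow> (nat \<Rightarrow> nat \<Rightarrow> real) \<Rightarrow> nat \<Rightarrow> nat
    \<Rightarrow> (nat \<Rightarrow> nat) pmf \<Rightarrow> bool" where
  "stationary_wip d P0 P1 N A \<mu> \<longleftrightarrow>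
     set_pmf \<mu> \<subseteq> config_space d N \<and> bind_pmf \<mu> (wip_step d P0 P1 A) = \<mu>"

definition frac :: "nat \<Rightarrow> (nat \<Rightarrow> nat) \<Rightarrow> nat \<Rightarrow> real" where
  "frac N n i = real (n i) / real N"

end

(*
  Given the current configuration, each coordinate of the next one is a sum of N independent
  Bernoulli variables with total mean N phi(M), so it deviates from it with sub-Gaussian tails
  exp(-delta^2 N / 4). As phi is Lipschitz and attracts the whole simplex uniformly to mstar,
  running the chain for an attraction time T from a stationary start shows that a stationary
  configuration is within any fixed distance of mstar outside an event of probability b e^(-c N).
  Non-singularity puts a neighbourhood of mstar inside the zone Z (s mstar), which gives (ii).
  On that zone phi is affine, phi m = mstar + L (m - mstar), so stationarity yields
  w = L w + err for w = E M - mstar, with err of the order of P(M not in Z). Uniform attraction of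
  the affine dynamics makes some power L^k halve every feasible direction at mstar, whence
  |w| <= 2 k |L|^k |err|, which is (i).
*)
theory Submission
  imports Defs
begin

section \<open>Partial sums, the simplex and the threshold state\<close>

lemma sum_split_at:
  fixes f :: "nat \<Rightarrow> 'a::comm_monoid_add"
  assumes "s \<in> {1..d}"
  shows "(\<Sum>i\<in>{1..d}. f i) = (\<Sum>i\<in>{1..<s}. f i) + f s + (\<Sum>i\<in>{s<..d}. f i)"
proof -
  have "{1..d} = {1..<s} \<union> insert s {s<..d}" "{1..<s} \<inter> insert s {s<..d} = {}"
    using assms by auto
  then show ?thesis by (simp add: sum.union_disjoint ac_simps)
qed

lemma sum_abs_diff_le:
  fixes m m' :: "'a \<Rightarrow> real" and e :: real
  assumes "finite A" "\<forall>k\<in>A. \<bar>m k - m' k\<bar> \<le> e"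
  shows "\<bar>(\<Sum>k\<in>A. m k) - (\<Sum>k\<in>A. m' k)\<bar> \<le> card A * e"
proof -
  have "\<bar>(\<Sum>k\<in>A. m k) - (\<Sum>k\<in>A. m' k)\<bar> \<le> (\<Sum>k\<in>A. \<bar>m k - m' k\<bar>)"
    by (simp only: sum_subtractf[symmetric] sum_abs)
  also have "\<dots> \<le> card A * e"
    using sum_bounded_above[of A "\<lambda>k. \<bar>m k - m' k\<bar>" e] assms by simp
  finally show ?thesis .
qed

lemma sum_weighted_abs_le:
  fixes u c :: "nat \<Rightarrow> real"
  assumes "A \<subseteq> {1..d}" "\<forall>i\<in>A. \<bar>u i\<bar> \<le> e" "\<forall>i\<in>A. 0 \<le> c i \<and> c i \<le> 1" "0 \<le> e"
  shows "\<bar>\<Sum>i\<in>A. u i * c i\<bar> \<le> real d * e"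
proof -
  have "\<bar>\<Sum>i\<in>A. u i * c i\<bar> \<le> (\<Sum>i\<in>A. \<bar>u i * c i\<bar>)" by (rule sum_abs)
  also have "\<dots> \<le> (\<Sum>i\<in>A. e)"
  proof (rule sum_mono)
    fix i assume "i \<in> A"
    then have "\<bar>u i\<bar> \<le> e" "0 \<le> c i" "c i \<le> 1" using assms by auto
    then show "\<bar>u i * c i\<bar> \<le> e" by (simp add: abs_mult) (metis abs_ge_zero mult_left_le order_trans)
  qed
  also have "\<dots> \<le> real d * e"
    using card_mono[OF _ assms(1)] assms(4) by (simp add: mult_right_mono)
  finally show ?thesis .
qed

lemma stochastic_nonneg: "stochastic d P \<Longrightarrow> i \<in> {1..d} \<Longrightarrow> j \<in> {1..d} \<Longrightarrow> 0 \<le> P i j"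
  by (auto simp: stochastic_def)

lemma stochastic_row_sum: "stochastic d P \<Longrightarrow> i \<in> {1..d} \<Longrightarrow> (\<Sum>j=1..d. P i j) = 1"
  by (auto simp: stochastic_def)

lemma stochastic_le_1: "stochastic d P \<Longrightarrow> i \<in> {1..d} \<Longrightarrow> j \<in> {1..d} \<Longrightarrow> P i j \<le> 1"
  using member_le_sum[of j "{1..d}" "P i"] stochastic_row_sum[of d P i]
  by (auto simp: stochastic_def)

lemma simplex_nonneg: "m \<in> simplex_d d \<Longrightarrow> i \<in> {1..d} \<Longrightarrow> 0 \<le> m i"
  by (auto simp: simplex_d_def)

lemma simplex_sum: "m \<in> simplex_d d \<Longrightarrow> (\<Sum>i=1..d. m i) = 1"
  by (auto simp: simplex_d_def)

lemma simplex_abs_le_1: "m \<in> simplex_d d \<Longrightarrow> i \<in> {1..d} \<Longrightarrow> \<bar>m i\<bar> \<le> 1"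
  by (auto simp: simplex_d_def)

lemma simplex_abs_diff_le_1:
  assumes "m \<in> simplex_d d" "m' \<in> simplex_d d" "i \<in> {1..d}"
  shows "\<bar>m i - m' i\<bar> \<le> 1"
  using simplex_nonneg[OF assms(1,3)] simplex_nonneg[OF assms(2,3)]
    simplex_abs_le_1[OF assms(1,3)] simplex_abs_le_1[OF assms(2,3)]
  by (simp add: abs_le_iff)

lemma simplexI:
  assumes "\<forall>i\<in>{1..d}. 0 \<le> m i" "(\<Sum>i=1..d. m i) = 1"
  shows "m \<in> simplex_d d"
proof -
  have "m i \<le> 1" if "i \<in> {1..d}" for i
    using member_le_sum[of i "{1..d}" m] that assms by simp
  then show ?thesis using assms by (simp add: simplex_d_def)
qed

lemma simplex_cong:
  assumes "\<forall>i\<in>{1..d}. m i = m' i"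
  shows "m \<in> simplex_d d \<longleftrightarrow> m' \<in> simplex_d d"
proof -
  have "(\<Sum>i=1..d. m i) = (\<Sum>i=1..d. m' i)" using assms by (intro sum.cong) auto
  then show ?thesis using assms by (simp add: simplex_d_def)
qed

lemma simplex_dim_pos: "m \<in> simplex_d d \<Longrightarrow> 1 \<le> d"
  using simplex_sum[of m d] by (cases d) auto

lemma s_of_eqI:
  assumes nonneg: "\<forall>i\<in>{1..d}. 0 \<le> m i"
    and s: "s \<in> {1..d}" "(\<Sum>i\<in>{1..<s}. m i) \<le> \<alpha>" "\<alpha> < (\<Sum>i\<in>{1..s}. m i)"
  shows "s_of d \<alpha> m = s"
  unfolding s_of_def
proof (rule the_equality)
  show "s \<in> {1..d} \<and> (\<Sum>i\<in>{1..<s}. m i) \<le> \<alpha> \<and> \<alpha> < (\<Sum>i\<in>{1..s}. m i)"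
    using s by blast
next
  fix s' assume s': "s' \<in> {1..d} \<and> (\<Sum>i\<in>{1..<s'}. m i) \<le> \<alpha> \<and> \<alpha> < (\<Sum>i\<in>{1..s'}. m i)"
  have mono: "(\<Sum>i\<in>{1..t}. m i) \<le> (\<Sum>i\<in>{1..<u}. m i)" if "t < u" "u \<in> {1..d}" for t u
    using that nonneg by (intro sum_mono2) auto
  show "s' = s"
  proof (rule ccontr)
    assume "s' \<noteq> s"
    then consider "s < s'" | "s' < s" by linarith
    then show False using mono[of s s'] mono[of s' s] s s' by cases auto
  qed
qed

lemma s_of_props:
  assumes m: "m \<in> simplex_d d" and "0 \<le> \<alpha>" "\<alpha> < 1"
  shows "s_of d \<alpha> m \<in> {1..d}" "(\<Sum>i\<in>{1..<s_of d \<alpha> m}. m i) \<le> \<alpha>"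
    "\<alpha> < (\<Sum>i\<in>{1..s_of d \<alpha> m}. m i)"
proof -
  define s where "s = (LEAST s. \<alpha> < (\<Sum>i\<in>{1..s}. m i))"
  have ex: "\<alpha> < (\<Sum>i\<in>{1..d}. m i)" using simplex_sum[OF m] assms by simp
  have s1: "\<alpha> < (\<Sum>i\<in>{1..s}. m i)" unfolding s_def by (rule LeastI[of _ d]) (rule ex)
  have sd: "s \<le> d" unfolding s_def by (rule Least_le) (rule ex)
  have s0: "s \<noteq> 0" using s1 assms by (cases s) auto
  have "\<not> \<alpha> < (\<Sum>i\<in>{1..s - 1}. m i)"
    unfolding s_def using not_less_Least[of "s - 1" "\<lambda>s. \<alpha> < (\<Sum>i\<in>{1..s}. m i)"] s0 s_def by simp
  moreover have "{1..<s} = {1..s - 1}" using s0 by auto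
  ultimately have s2: "(\<Sum>i\<in>{1..<s}. m i) \<le> \<alpha>" by simp
  have "s \<in> {1..d}" using s0 sd by auto
  moreover have "s_of d \<alpha> m = s"
    using s_of_eqI[of d m s \<alpha>] m s1 s2 \<open>s \<in> {1..d}\<close> by (simp add: simplex_nonneg)
  ultimately show "s_of d \<alpha> m \<in> {1..d}" "(\<Sum>i\<in>{1..<s_of d \<alpha> m}. m i) \<le> \<alpha>"
    "\<alpha> < (\<Sum>i\<in>{1..s_of d \<alpha> m}. m i)"
    using s1 s2 by simp_all
qed

text \<open>Non-singularity makes both threshold inequalities strict at \<open>mstar\<close>, so they survive
  small perturbations.\<close>
lemma s_of_locally_constant:
  assumes m0: "mstar \<in> simplex_d d" and ns: "\<not> singular d \<alpha> mstar" and "0 < \<alpha>" "\<alpha> < 1"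
  shows "\<exists>\<rho>>0. \<forall>m\<in>simplex_d d. (\<forall>i\<in>{1..d}. \<bar>m i - mstar i\<bar> \<le> \<rho>) \<longrightarrow>
    s_of d \<alpha> m = s_of d \<alpha> mstar"
proof -
  define s where "s = s_of d \<alpha> mstar"
  note sp = s_of_props[OF m0 less_imp_le[OF assms(3)] assms(4), folded s_def]
  have lt: "(\<Sum>i\<in>{1..<s}. mstar i) < \<alpha>"
  proof (cases "s = 1")
    case True then show ?thesis using assms(3) by simp
  next
    case False
    then have "s - 1 \<in> {1..d}" "{1..<s} = {1..s-1}" using sp by auto
    then show ?thesis using ns sp unfolding singular_def by (metis order_le_less)
  qed
  define g where "g = min (\<alpha> - (\<Sum>i\<in>{1..<s}. mstar i)) ((\<Sum>i\<in>{1..s}. mstar i) - \<alpha>)"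
  define \<rho> where "\<rho> = g / (real d + 1)"
  have "0 < g" using lt sp unfolding g_def by simp
  then have \<rho>: "0 < \<rho>" "real d * \<rho> < g" unfolding \<rho>_def by (simp_all add: field_simps)
  have "s_of d \<alpha> m = s"
    if m: "m \<in> simplex_d d" and close: "\<forall>i\<in>{1..d}. \<bar>m i - mstar i\<bar> \<le> \<rho>" for m
  proof -
    have partial: "\<bar>(\<Sum>i\<in>A. m i) - (\<Sum>i\<in>A. mstar i)\<bar> \<le> real d * \<rho>" if "A \<subseteq> {1..d}" for A
    proof -
      have "\<bar>(\<Sum>i\<in>A. m i) - (\<Sum>i\<in>A. mstar i)\<bar> \<le> card A * \<rho>"
        by (rule sum_abs_diff_le) (use close that finite_subset in auto)
      also have "\<dots> \<le> real d * \<rho>" using card_mono[OF _ that] \<rho> by (simp add: mult_right_mono)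
      finally show ?thesis .
    qed
    have "{1..<s} \<subseteq> {1..d}" "{1..s} \<subseteq> {1..d}" using sp by auto
    then have "(\<Sum>i\<in>{1..<s}. m i) \<le> \<alpha>" "\<alpha> < (\<Sum>i\<in>{1..s}. m i)"
      using partial[of "{1..<s}"] partial[of "{1..s}"] sp \<rho> unfolding g_def by (auto simp: abs_le_iff)
    then show ?thesis using s_of_eqI[of d m s] m sp by (simp add: simplex_nonneg)
  qed
  then show ?thesis using \<rho> unfolding s_def by blast
qed

section \<open>The mean-field map and its linearisation on a zone\<close>

text \<open>The mass of state \<open>i\<close> that WIP activates. Written with it, \<open>phi\<close> is visibly
  Lipschitz and matches the counts \<open>n_active\<close> (lemma \<open>phi_eq_phi_act\<close>).\<close>
definition active_frac :: "real \<Rightarrow> (nat \<Rightarrow> real) \<Rightarrow> nat \<Rightarrow> real" where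
  "active_frac \<alpha> m i = min (m i) (max 0 (\<alpha> - (\<Sum>k\<in>{1..<i}. m k)))"

definition phi_act :: "nat \<Rightarrow> (nat \<Rightarrow> nat \<Rightarrow> real) \<Rightarrow> (nat \<Rightarrow> nat \<Rightarrow> real) \<Rightarrow> real
    \<Rightarrow> (nat \<Rightarrow> real) \<Rightarrow> nat \<Rightarrow> real" where
  "phi_act d P0 P1 \<alpha> m j =
     (\<Sum>i=1..d. active_frac \<alpha> m i * P1 i j + (m i - active_frac \<alpha> m i) * P0 i j)"

lemma active_frac_le: "active_frac \<alpha> m i \<le> m i"
  by (simp add: active_frac_def)

lemma active_frac_nonneg: "0 \<le> m i \<Longrightarrow> 0 \<le> active_frac \<alpha> m i"
  by (simp add: active_frac_def)

lemma active_frac_lipschitz: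
  assumes i: "i \<in> {1..d}" and close: "\<forall>k\<in>{1..d}. \<bar>m k - m' k\<bar> \<le> e" and "0 \<le> e"
  shows "\<bar>active_frac \<alpha> m i - active_frac \<alpha> m' i\<bar> \<le> real d * e"
proof -
  have "\<bar>(\<Sum>k\<in>{1..<i}. m k) - (\<Sum>k\<in>{1..<i}. m' k)\<bar> \<le> card {1..<i} * e"
    by (rule sum_abs_diff_le) (use close i in auto)
  also have "\<dots> \<le> real d * e" using i assms(3) by (intro mult_right_mono) auto
  finally have "\<bar>(\<Sum>k\<in>{1..<i}. m k) - (\<Sum>k\<in>{1..<i}. m' k)\<bar> \<le> real d * e" .
  moreover have "\<bar>m i - m' i\<bar> \<le> e" using close i by auto
  moreover have "e \<le> real d * e" using i assms(3) by (simp add: mult_le_cancel_right1)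
  ultimately show ?thesis unfolding active_frac_def by (simp add: min_def max_def abs_le_iff)
qed

lemma phi_eq_phi_act:
  assumes m: "m \<in> simplex_d d" and "0 \<le> \<alpha>" "\<alpha> < 1"
  shows "phi d P0 P1 \<alpha> m j = phi_act d P0 P1 \<alpha> m j"
proof -
  define s where "s = s_of d \<alpha> m"
  note sp = s_of_props[OF assms, folded s_def]
  have nonneg: "\<forall>i\<in>{1..d}. 0 \<le> m i" using m by (simp add: simplex_nonneg)
  have last: "(\<Sum>i\<in>{1..s}. m i) = m s + (\<Sum>i\<in>{1..<s}. m i)" using sp by (intro sum.last_plus) auto
  have below: "active_frac \<alpha> m i = m i" if "i \<in> {1..<s}" for i
  proof -
    have "(\<Sum>k\<in>{1..i}. m k) \<le> (\<Sum>k\<in>{1..<s}. m k)" using that sp nonneg by (intro sum_mono2) auto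
    moreover have "(\<Sum>k\<in>{1..i}. m k) = m i + (\<Sum>k\<in>{1..<i}. m k)" using that by (intro sum.last_plus) auto
    ultimately show ?thesis using sp nonneg that unfolding active_frac_def by (auto simp: min_def max_def)
  qed
  have at: "active_frac \<alpha> m s = \<alpha> - (\<Sum>i\<in>{1..<s}. m i)"
    using sp last unfolding active_frac_def by (simp add: min_def max_def)
  have above: "active_frac \<alpha> m i = 0" if "i \<in> {s<..d}" for i
  proof -
    have "(\<Sum>k\<in>{1..s}. m k) \<le> (\<Sum>k\<in>{1..<i}. m k)" using that sp nonneg by (intro sum_mono2) auto
    moreover have "0 \<le> m i" using nonneg that sp by auto
    ultimately show ?thesis using sp unfolding active_frac_def by (auto simp: min_def max_def)
  qed
  have "(\<Sum>i\<in>{1..<s}. active_frac \<alpha> m i * P1 i j + (m i - active_frac \<alpha> m i) * P0 i j)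
      = (\<Sum>i\<in>{1..<s}. m i * P1 i j)"
    by (rule sum.cong) (simp_all add: below)
  moreover have "(\<Sum>i\<in>{s<..d}. active_frac \<alpha> m i * P1 i j + (m i - active_frac \<alpha> m i) * P0 i j)
      = (\<Sum>i\<in>{s<..d}. m i * P0 i j)"
    by (rule sum.cong) (simp_all add: above)
  ultimately have "phi_act d P0 P1 \<alpha> m j = (\<Sum>i\<in>{1..<s}. m i * P1 i j)
      + (active_frac \<alpha> m s * P1 s j + (m s - active_frac \<alpha> m s) * P0 s j)
      + (\<Sum>i\<in>{s<..d}. m i * P0 i j)"
    unfolding phi_act_def sum_split_at[OF sp(1)] by simp
  then show ?thesis unfolding phi_def Let_def s_def[symmetric] at last by (simp add: algebra_simps)
qed

lemma phi_act_cong: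
  assumes "\<forall>i\<in>{1..d}. m i = m' i"
  shows "phi_act d P0 P1 \<alpha> m = phi_act d P0 P1 \<alpha> m'"
proof -
  have "active_frac \<alpha> m i = active_frac \<alpha> m' i" if "i \<in> {1..d}" for i
  proof -
    have "(\<Sum>k\<in>{1..<i}. m k) = (\<Sum>k\<in>{1..<i}. m' k)" using assms that by (intro sum.cong) auto
    then show ?thesis using assms that by (simp add: active_frac_def)
  qed
  then show ?thesis unfolding phi_act_def using assms by (intro ext sum.cong) auto
qed

lemma phi_cong:
  assumes "m \<in> simplex_d d" "\<forall>i\<in>{1..d}. m i = m' i" "0 \<le> \<alpha>" "\<alpha> < 1"
  shows "phi d P0 P1 \<alpha> m = phi d P0 P1 \<alpha> m'"
  using phi_eq_phi_act[of m d \<alpha>] phi_eq_phi_act[of m' d \<alpha>] phi_act_cong[OF assms(2)]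
    simplex_cong[OF assms(2)] assms by auto

text \<open>On the zone \<open>Z s\<close> the map \<open>phi\<close> is affine; this is its linear part.\<close>
definition zone_lin :: "nat \<Rightarrow> (nat \<Rightarrow> nat \<Rightarrow> real) \<Rightarrow> (nat \<Rightarrow> nat \<Rightarrow> real) \<Rightarrow> nat
    \<Rightarrow> (nat \<Rightarrow> real) \<Rightarrow> nat \<Rightarrow> real" where
  "zone_lin d P0 P1 s w j =
      (\<Sum>i\<in>{1..<s}. w i * P1 i j)
      - (\<Sum>i\<in>{1..<s}. w i) * P1 s j
      + (\<Sum>i\<in>{1..s}. w i) * P0 s j
      + (\<Sum>i\<in>{s<..d}. w i * P0 i j)"

lemma phi_diff_eq_zone_lin:
  assumes "s_of d \<alpha> m = s" "s_of d \<alpha> m' = s"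
  shows "phi d P0 P1 \<alpha> m j - phi d P0 P1 \<alpha> m' j = zone_lin d P0 P1 s (\<lambda>i. m i - m' i) j"
  using assms unfolding phi_def zone_lin_def Let_def by (simp add: sum_subtractf algebra_simps)

lemma zone_lin_add:
  "zone_lin d P0 P1 s (\<lambda>i. u i + v i) j = zone_lin d P0 P1 s u j + zone_lin d P0 P1 s v j"
  unfolding zone_lin_def by (simp add: sum.distrib algebra_simps)

lemma zone_lin_scale: "zone_lin d P0 P1 s (\<lambda>i. c * u i) j = c * zone_lin d P0 P1 s u j"
  unfolding zone_lin_def by (simp add: sum_distrib_left algebra_simps)

lemma zone_lin_cong:
  "s \<in> {1..d} \<Longrightarrow> \<forall>i\<in>{1..d}. u i = v i \<Longrightarrow> zone_lin d P0 P1 s u = zone_lin d P0 P1 s v"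
  unfolding zone_lin_def
  by (intro ext) (auto intro!: sum.cong arg_cong2[where f="(+)"] arg_cong2[where f="(-)"])

lemma funpow_zone_lin_add:
  "(zone_lin d P0 P1 s ^^ k) (\<lambda>i. u i + v i)
     = (\<lambda>j. (zone_lin d P0 P1 s ^^ k) u j + (zone_lin d P0 P1 s ^^ k) v j)"
  by (induction k) (simp_all add: zone_lin_add)

lemma funpow_zone_lin_scale:
  "(zone_lin d P0 P1 s ^^ k) (\<lambda>i. c * u i) = (\<lambda>j. c * (zone_lin d P0 P1 s ^^ k) u j)"
  by (induction k) (simp_all add: zone_lin_scale)

lemma funpow_zone_lin_cong:
  assumes "s \<in> {1..d}" "\<forall>i\<in>{1..d}. u i = v i" "j \<in> {1..d}"
  shows "(zone_lin d P0 P1 s ^^ k) u j = (zone_lin d P0 P1 s ^^ k) v j"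
  using assms zone_lin_cong[OF assms(1,2)] by (cases k) (simp_all add: funpow_Suc_right del: funpow.simps)

lemma zone_lin_fixed_point_unfold:
  assumes s: "s \<in> {1..d}" and eq: "\<forall>j\<in>{1..d}. w j = zone_lin d P0 P1 s w j + err j"
    and j: "j \<in> {1..d}"
  shows "w j = (zone_lin d P0 P1 s ^^ k) w j + (\<Sum>i<k. (zone_lin d P0 P1 s ^^ i) err j)"
proof (induction k)
  case (Suc k)
  let ?L = "zone_lin d P0 P1 s"
  have "(?L ^^ k) w j = (?L ^^ k) (\<lambda>j. ?L w j + err j) j"
    using eq j by (intro funpow_zone_lin_cong[OF s]) auto
  also have "\<dots> = (?L ^^ Suc k) w j + (?L ^^ k) err j"
    by (simp add: funpow_zone_lin_add funpow_Suc_right del: funpow.simps)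
  finally show ?case using Suc by simp
qed simp

locale mean_field_model =
  fixes d :: nat and P0 P1 :: "nat \<Rightarrow> nat \<Rightarrow> real" and \<alpha> :: real
  assumes stochastic_P0: "stochastic d P0" and stochastic_P1: "stochastic d P1"
    and alpha_pos: "0 < \<alpha>" and alpha_less_1: "\<alpha> < 1"
begin

abbreviation \<Phi> :: "(nat \<Rightarrow> real) \<Rightarrow> nat \<Rightarrow> real" where
  "\<Phi> \<equiv> phi d P0 P1 \<alpha>"

abbreviation lip :: real where
  "lip \<equiv> real d * (2 * real d + 1)"

lemma transition_bounds:
  assumes "i \<in> {1..d}" "j \<in> {1..d}"
  shows "0 \<le> P0 i j" "P0 i j \<le> 1" "0 \<le> P1 i j" "P1 i j \<le> 1"
  using assms stochastic_nonneg stochastic_le_1 stochastic_P0 stochastic_P1 by auto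

lemma phi_simplex:
  assumes m: "m \<in> simplex_d d"
  shows "\<Phi> m \<in> simplex_d d"
proof (rule simplexI)
  have "\<Phi> m j = phi_act d P0 P1 \<alpha> m j" for j
    using phi_eq_phi_act[OF m] alpha_pos alpha_less_1 by simp
  then have \<Phi>_eq: "\<Phi> m = phi_act d P0 P1 \<alpha> m" by blast
  show "\<forall>j\<in>{1..d}. 0 \<le> \<Phi> m j"
    unfolding \<Phi>_eq phi_act_def
    using active_frac_nonneg active_frac_le simplex_nonneg[OF m] transition_bounds
    by (auto intro!: sum_nonneg add_nonneg_nonneg mult_nonneg_nonneg)
  have "(\<Sum>j=1..d. \<Phi> m j)
      = (\<Sum>i=1..d. \<Sum>j=1..d. active_frac \<alpha> m i * P1 i j + (m i - active_frac \<alpha> m i) * P0 i j)"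
    unfolding \<Phi>_eq phi_act_def by (rule sum.swap)
  also have "\<dots> = (\<Sum>i=1..d. active_frac \<alpha> m i * (\<Sum>j=1..d. P1 i j)
      + (m i - active_frac \<alpha> m i) * (\<Sum>j=1..d. P0 i j))"
    by (simp add: sum.distrib sum_distrib_left)
  also have "\<dots> = (\<Sum>i=1..d. m i)"
    using stochastic_row_sum[OF stochastic_P0] stochastic_row_sum[OF stochastic_P1]
    by (intro sum.cong) auto
  finally show "(\<Sum>j=1..d. \<Phi> m j) = 1" using simplex_sum[OF m] by simp
qed

lemma funpow_phi_simplex: "m \<in> simplex_d d \<Longrightarrow> (\<Phi> ^^ t) m \<in> simplex_d d"
  by (induction t) (auto intro: phi_simplex)

lemma phi_lipschitz:
  assumes m: "m \<in> simplex_d d" and m': "m' \<in> simplex_d d"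
    and close: "\<forall>k\<in>{1..d}. \<bar>m k - m' k\<bar> \<le> e" and e: "0 \<le> e" and j: "j \<in> {1..d}"
  shows "\<bar>\<Phi> m j - \<Phi> m' j\<bar> \<le> lip * e"
proof -
  let ?f = "\<lambda>m i. active_frac \<alpha> m i * P1 i j + (m i - active_frac \<alpha> m i) * P0 i j"
  have summand: "\<bar>?f m i - ?f m' i\<bar> \<le> (2 * real d + 1) * e" if i: "i \<in> {1..d}" for i
  proof -
    let ?a = "active_frac \<alpha> m i - active_frac \<alpha> m' i"
    have a: "\<bar>?a\<bar> \<le> real d * e" by (rule active_frac_lipschitz[OF i close e])
    have "\<bar>m i - m' i\<bar> \<le> e" using close i by auto
    then have b: "\<bar>(m i - m' i) - ?a\<bar> \<le> e + real d * e" using a by linarith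
    have "\<bar>?f m i - ?f m' i\<bar> = \<bar>?a * P1 i j + ((m i - m' i) - ?a) * P0 i j\<bar>"
      by (simp add: algebra_simps)
    also have "\<dots> \<le> \<bar>?a\<bar> * P1 i j + \<bar>(m i - m' i) - ?a\<bar> * P0 i j"
      using transition_bounds[OF i j] by (simp add: abs_mult order_trans[OF abs_triangle_ineq])
    also have "\<dots> \<le> real d * e * 1 + (e + real d * e) * 1"
      using a b transition_bounds[OF i j] by (intro add_mono mult_mono) auto
    finally show ?thesis by (simp add: algebra_simps)
  qed
  have "\<bar>phi_act d P0 P1 \<alpha> m j - phi_act d P0 P1 \<alpha> m' j\<bar> \<le> card {1..d} * ((2 * real d + 1) * e)"
    unfolding phi_act_def by (rule sum_abs_diff_le) (use summand in auto)
  then show ?thesis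
    using phi_eq_phi_act[OF m] phi_eq_phi_act[OF m'] alpha_pos alpha_less_1 by simp
qed

lemma funpow_phi_lipschitz:
  assumes m: "m \<in> simplex_d d" and m': "m' \<in> simplex_d d"
    and close: "\<forall>k\<in>{1..d}. \<bar>m k - m' k\<bar> \<le> e" and e: "0 \<le> e" and j: "j \<in> {1..d}"
  shows "\<bar>(\<Phi> ^^ t) m j - (\<Phi> ^^ t) m' j\<bar> \<le> lip ^ t * e"
  using j
proof (induction t arbitrary: j)
  case (Suc t)
  have "\<bar>\<Phi> ((\<Phi> ^^ t) m) j - \<Phi> ((\<Phi> ^^ t) m') j\<bar> \<le> lip * (lip ^ t * e)"
    using Suc e by (intro phi_lipschitz funpow_phi_simplex m m') auto
  then show ?case by (simp add: mult.assoc)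
qed (use close in simp)

lemma funpow_phi_fixed_point:
  assumes m: "m \<in> simplex_d d" and fixed: "\<forall>j\<in>{1..d}. \<Phi> m j = m j"
  shows "\<forall>j\<in>{1..d}. (\<Phi> ^^ t) m j = m j"
proof (induction t)
  case (Suc t)
  have "\<Phi> ((\<Phi> ^^ t) m) = \<Phi> m"
    using phi_cong[OF m, of "(\<Phi> ^^ t) m"] Suc alpha_pos alpha_less_1 by simp
  then show ?case using fixed by simp
qed simp

lemma zone_lin_bound:
  assumes s: "s \<in> {1..d}" and u: "\<forall>i\<in>{1..d}. \<bar>u i\<bar> \<le> e" and e: "0 \<le> e" and j: "j \<in> {1..d}"
  shows "\<bar>zone_lin d P0 P1 s u j\<bar> \<le> 4 * real d * e"
proof -
  have P: "\<forall>i\<in>{1..d}. 0 \<le> P0 i j \<and> P0 i j \<le> 1" "\<forall>i\<in>{1..d}. 0 \<le> P1 i j \<and> P1 i j \<le> 1"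
    using transition_bounds j by auto
  have "\<bar>\<Sum>i\<in>{1..<s}. u i * P1 i j\<bar> \<le> real d * e" "\<bar>\<Sum>i\<in>{s<..d}. u i * P0 i j\<bar> \<le> real d * e"
    using s u e P by (intro sum_weighted_abs_le; auto)+
  moreover have partial: "\<bar>(\<Sum>i\<in>A. u i) * c\<bar> \<le> real d * e" if "A \<subseteq> {1..d}" "0 \<le> c" "c \<le> 1" for A c
  proof -
    have "\<bar>\<Sum>i\<in>A. u i * 1\<bar> \<le> real d * e" using that u e by (intro sum_weighted_abs_le) auto
    moreover have "\<bar>(\<Sum>i\<in>A. u i) * c\<bar> \<le> \<bar>\<Sum>i\<in>A. u i\<bar>" using that by (simp add: abs_mult mult_left_le)
    ultimately show ?thesis by simp
  qed
  moreover have "\<bar>(\<Sum>i\<in>{1..<s}. u i) * P1 s j\<bar> \<le> real d * e" "\<bar>(\<Sum>i\<in>{1..s}. u i) * P0 s j\<bar> \<le> real d * e"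
    using P s by (intro partial; auto)+
  ultimately show ?thesis unfolding zone_lin_def by (simp add: abs_le_iff)
qed

lemma funpow_zone_lin_bound:
  assumes s: "s \<in> {1..d}" and u: "\<forall>i\<in>{1..d}. \<bar>u i\<bar> \<le> e" and e: "0 \<le> e" and j: "j \<in> {1..d}"
  shows "\<bar>(zone_lin d P0 P1 s ^^ k) u j\<bar> \<le> (4 * real d) ^ k * e"
  using j
proof (induction k arbitrary: j)
  case (Suc k)
  have "\<bar>zone_lin d P0 P1 s ((zone_lin d P0 P1 s ^^ k) u) j\<bar> \<le> 4 * real d * ((4 * real d) ^ k * e)"
    using Suc e by (intro zone_lin_bound s) auto
  then show ?case by (simp add: mult.assoc)
qed (use u in simp)

lemma funpow_zone_lin_sum_bound:
  assumes s: "s \<in> {1..d}" and u: "\<forall>i\<in>{1..d}. \<bar>u i\<bar> \<le> e" and e: "0 \<le> e" and j: "j \<in> {1..d}"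
  shows "\<bar>\<Sum>i<k. (zone_lin d P0 P1 s ^^ i) u j\<bar> \<le> real k * (4 * real d) ^ k * e"
proof -
  have "\<bar>\<Sum>i<k. (zone_lin d P0 P1 s ^^ i) u j\<bar> \<le> (\<Sum>i<k. (4 * real d) ^ k * e)"
  proof (rule order_trans[OF sum_abs sum_mono])
    fix i assume "i \<in> {..<k}"
    have "\<bar>(zone_lin d P0 P1 s ^^ i) u j\<bar> \<le> (4 * real d) ^ i * e"
      by (rule funpow_zone_lin_bound[OF s u e j])
    also have "\<dots> \<le> (4 * real d) ^ k * e"
      using \<open>i \<in> {..<k}\<close> s e by (intro mult_right_mono power_increasing) auto
    finally show "\<bar>(zone_lin d P0 P1 s ^^ i) u j\<bar> \<le> (4 * real d) ^ k * e" .
  qed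
  then show ?thesis by simp
qed

end

section \<open>Attraction near a non-singular fixed point\<close>

definition feasible_direction :: "nat \<Rightarrow> (nat \<Rightarrow> real) \<Rightarrow> (nat \<Rightarrow> real) \<Rightarrow> bool" where
  "feasible_direction d m w \<longleftrightarrow> (\<Sum>i=1..d. w i) = 0 \<and> (\<forall>i\<in>{1..d}. m i = 0 \<longrightarrow> 0 \<le> w i)"

lemma feasible_direction_diff:
  assumes "m \<in> simplex_d d" "m' \<in> simplex_d d"
  shows "feasible_direction d m' (\<lambda>i. m i - m' i)"
  using assms simplex_sum[of m d] simplex_sum[of m' d] simplex_nonneg[of m d]
  by (simp add: feasible_direction_def sum_subtractf)

lemma feasible_direction_scale:
  "0 \<le> c \<Longrightarrow> feasible_direction d m w \<Longrightarrow> feasible_direction d m (\<lambda>i. c * w i)"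
  by (simp add: feasible_direction_def sum_distrib_left[symmetric])

lemma feasible_direction_add_in_simplex:
  assumes m: "m \<in> simplex_d d" and w: "feasible_direction d m w"
    and small: "\<forall>i\<in>{1..d}. \<bar>w i\<bar> \<le> r" and r: "\<forall>i\<in>{1..d}. 0 < m i \<longrightarrow> r \<le> m i"
  shows "(\<lambda>i. m i + w i) \<in> simplex_d d"
proof (rule simplexI)
  show "\<forall>i\<in>{1..d}. 0 \<le> m i + w i"
  proof
    fix i assume i: "i \<in> {1..d}"
    show "0 \<le> m i + w i"
    proof (cases "m i = 0")
      case True then show ?thesis using w i by (simp add: feasible_direction_def)
    next
      case False
      then have "r \<le> m i" using r simplex_nonneg[OF m i] i by simp
      moreover have "- w i \<le> r" using small i by (auto simp: abs_le_iff)
      ultimately show ?thesis by linarith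
    qed
  qed
  show "(\<Sum>i=1..d. m i + w i) = 1"
    using w simplex_sum[OF m] by (simp add: sum.distrib feasible_direction_def)
qed

lemma exists_pos_lower_bound:
  fixes f :: "'a \<Rightarrow> real"
  assumes "finite A"
  shows "\<exists>r>0. \<forall>x\<in>A. 0 < f x \<longrightarrow> r \<le> f x"
proof -
  define S where "S = insert 1 (f ` {x\<in>A. 0 < f x})"
  have S: "finite S" "S \<noteq> {}" using assms unfolding S_def by auto
  have "0 < Min S" using S by (subst Min_gr_iff) (auto simp: S_def)
  moreover have "\<forall>x\<in>A. 0 < f x \<longrightarrow> Min S \<le> f x" using S by (auto simp: S_def intro: Min_le)
  ultimately show ?thesis by blast
qed

locale mean_field_attractor = mean_field_model +
  fixes mstar :: "nat \<Rightarrow> real"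
  assumes mstar_simplex: "mstar \<in> simplex_d d"
    and mstar_fixed: "\<forall>j\<in>{1..d}. phi d P0 P1 \<alpha> mstar j = mstar j"
    and attractor: "uniform_global_attractor d (phi d P0 P1 \<alpha>) mstar"
    and nonsingular: "\<not> singular d \<alpha> mstar"
begin

abbreviation sstar :: nat where
  "sstar \<equiv> s_of d \<alpha> mstar"

abbreviation Lstar :: "(nat \<Rightarrow> real) \<Rightarrow> nat \<Rightarrow> real" where
  "Lstar \<equiv> zone_lin d P0 P1 sstar"

lemma d_ge_1: "1 \<le> d"
  by (rule simplex_dim_pos[OF mstar_simplex])

lemma sstar_range: "sstar \<in> {1..d}"
  using s_of_props(1)[OF mstar_simplex] alpha_pos alpha_less_1 by simp

lemma attractorE:
  assumes "0 < \<epsilon>"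
  obtains T where "\<forall>t\<ge>T. \<forall>m\<in>simplex_d d. \<forall>i\<in>{1..d}. \<bar>(\<Phi> ^^ t) m i - mstar i\<bar> \<le> \<epsilon>"
  using attractor assms unfolding uniform_global_attractor_def by blast

lemma zone_nbhd:
  obtains \<rho> where "0 < \<rho>"
    "\<forall>m\<in>simplex_d d. (\<forall>i\<in>{1..d}. \<bar>m i - mstar i\<bar> \<le> \<rho>) \<longrightarrow> s_of d \<alpha> m = sstar"
  using s_of_locally_constant[OF mstar_simplex nonsingular alpha_pos alpha_less_1] by blast

lemma phi_in_zone:
  assumes "s_of d \<alpha> m = sstar" "j \<in> {1..d}"
  shows "\<Phi> m j = mstar j + Lstar (\<lambda>i. m i - mstar i) j"
  using phi_diff_eq_zone_lin[OF assms(1) refl, of P0 P1 j] mstar_fixed assms(2) by simp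

lemma funpow_phi_in_zone:
  assumes zone: "\<forall>t. s_of d \<alpha> ((\<Phi> ^^ t) y) = sstar" and j: "j \<in> {1..d}"
  shows "(\<Phi> ^^ t) y j = mstar j + (Lstar ^^ t) (\<lambda>i. y i - mstar i) j"
  using j
proof (induction t arbitrary: j)
  case (Suc t)
  have "(\<Phi> ^^ Suc t) y j = mstar j + Lstar (\<lambda>i. (\<Phi> ^^ t) y i - mstar i) j"
    using phi_in_zone[OF zone[rule_format, of t] Suc.prems] by simp
  also have "Lstar (\<lambda>i. (\<Phi> ^^ t) y i - mstar i) = Lstar ((Lstar ^^ t) (\<lambda>i. y i - mstar i))"
    using Suc.IH by (intro zone_lin_cong[OF sstar_range]) auto
  finally show ?case by simp
qed simp

text \<open>Before the attraction time \<open>T\<close> the orbit is kept in the zone by Lipschitz continuity,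
  afterwards by attraction.\<close>
lemma funpow_phi_stays_in_zone:
  obtains \<rho> where "0 < \<rho>"
    "\<forall>y\<in>simplex_d d. (\<forall>i\<in>{1..d}. \<bar>y i - mstar i\<bar> \<le> \<rho>) \<longrightarrow> (\<forall>t. s_of d \<alpha> ((\<Phi> ^^ t) y) = sstar)"
proof -
  obtain \<rho>0 where \<rho>0: "0 < \<rho>0"
    and zone: "\<forall>m\<in>simplex_d d. (\<forall>i\<in>{1..d}. \<bar>m i - mstar i\<bar> \<le> \<rho>0) \<longrightarrow> s_of d \<alpha> m = sstar"
    by (rule zone_nbhd)
  obtain T where T: "\<forall>t\<ge>T. \<forall>m\<in>simplex_d d. \<forall>i\<in>{1..d}. \<bar>(\<Phi> ^^ t) m i - mstar i\<bar> \<le> \<rho>0"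
    using attractorE[OF \<rho>0] .
  have "1 * 1 \<le> lip" using d_ge_1 by (intro mult_mono) auto
  then have lip: "1 \<le> lip" by simp
  define \<rho> where "\<rho> = \<rho>0 / lip ^ T"
  have \<rho>: "0 < \<rho>" "lip ^ T * \<rho> = \<rho>0" using \<rho>0 lip d_ge_1 by (simp_all add: \<rho>_def)
  have "s_of d \<alpha> ((\<Phi> ^^ t) y) = sstar"
    if y: "y \<in> simplex_d d" and close: "\<forall>i\<in>{1..d}. \<bar>y i - mstar i\<bar> \<le> \<rho>" for y t
  proof (cases "T \<le> t")
    case True then show ?thesis using T zone funpow_phi_simplex[OF y] y by blast
  next
    case False
    have "\<bar>(\<Phi> ^^ t) y i - mstar i\<bar> \<le> \<rho>0" if i: "i \<in> {1..d}" for i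
    proof -
      have "\<bar>(\<Phi> ^^ t) y i - (\<Phi> ^^ t) mstar i\<bar> \<le> lip ^ t * \<rho>"
        using funpow_phi_lipschitz[OF y mstar_simplex close _ i] \<rho> by simp
      moreover have "(\<Phi> ^^ t) mstar i = mstar i"
        using funpow_phi_fixed_point[OF mstar_simplex mstar_fixed] i by blast
      moreover have "lip ^ t * \<rho> \<le> lip ^ T * \<rho>"
        using False lip \<rho> by (intro mult_right_mono power_increasing) auto
      ultimately show ?thesis using \<rho> by simp
    qed
    then show ?thesis using zone funpow_phi_simplex[OF y] by blast
  qed
  then show ?thesis using \<rho> that by blast
qed

text \<open>An orbit started at \<open>mstar + c w\<close> with \<open>c\<close> small stays in the zone, so it equals
  \<open>mstar + c Lstar^t w\<close>; uniform attraction of the orbit then bounds \<open>Lstar^k w\<close>.\<close>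
lemma local_contraction:
  obtains k where "\<forall>w e. feasible_direction d mstar w \<longrightarrow> 0 < e \<longrightarrow> (\<forall>i\<in>{1..d}. \<bar>w i\<bar> \<le> e)
    \<longrightarrow> (\<forall>j\<in>{1..d}. \<bar>(Lstar ^^ k) w j\<bar> \<le> e / 2)"
proof -
  obtain \<rho> where \<rho>: "0 < \<rho>" and stay: "\<forall>y\<in>simplex_d d. (\<forall>i\<in>{1..d}. \<bar>y i - mstar i\<bar> \<le> \<rho>)
      \<longrightarrow> (\<forall>t. s_of d \<alpha> ((\<Phi> ^^ t) y) = sstar)"
    by (rule funpow_phi_stays_in_zone)
  obtain r where r: "0 < r" "\<forall>i\<in>{1..d}. 0 < mstar i \<longrightarrow> r \<le> mstar i"
    using exists_pos_lower_bound[of "{1..d}" mstar] by auto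
  define \<rho>' where "\<rho>' = min \<rho> r"
  have \<rho>': "0 < \<rho>'" "\<rho>' \<le> \<rho>" "\<rho>' \<le> r" using \<rho> r by (auto simp: \<rho>'_def)
  obtain k where k: "\<forall>t\<ge>k. \<forall>m\<in>simplex_d d. \<forall>i\<in>{1..d}. \<bar>(\<Phi> ^^ t) m i - mstar i\<bar> \<le> \<rho>' / 2"
    using attractorE[of "\<rho>' / 2"] \<rho>' by auto
  have "\<bar>(Lstar ^^ k) w j\<bar> \<le> e / 2"
    if w: "feasible_direction d mstar w" and e: "0 < e" and small: "\<forall>i\<in>{1..d}. \<bar>w i\<bar> \<le> e"
      and j: "j \<in> {1..d}" for w e j
  proof -
    define c where "c = \<rho>' / e"
    have c: "0 < c" "c * e = \<rho>'" using \<rho>' e by (simp_all add: c_def)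
    have cw: "\<forall>i\<in>{1..d}. \<bar>c * w i\<bar> \<le> \<rho>'"
      using small c by (auto simp: abs_mult intro: order_trans[OF mult_left_mono])
    have y: "(\<lambda>i. mstar i + c * w i) \<in> simplex_d d"
      using cw \<rho>' r feasible_direction_scale[OF less_imp_le[OF c(1)] w]
      by (intro feasible_direction_add_in_simplex[OF mstar_simplex]) auto
    have "\<forall>i\<in>{1..d}. \<bar>(mstar i + c * w i) - mstar i\<bar> \<le> \<rho>" using cw \<rho>' by auto
    then have "\<forall>t. s_of d \<alpha> ((\<Phi> ^^ t) (\<lambda>i. mstar i + c * w i)) = sstar"
      using stay[rule_format, OF y] by simp
    then have "(\<Phi> ^^ k) (\<lambda>i. mstar i + c * w i) j = mstar j + c * (Lstar ^^ k) w j"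
      using funpow_phi_in_zone[OF _ j] funpow_zone_lin_scale by simp
    moreover have "\<bar>(\<Phi> ^^ k) (\<lambda>i. mstar i + c * w i) j - mstar j\<bar> \<le> \<rho>' / 2"
      using k y j by blast
    ultimately have "c * \<bar>(Lstar ^^ k) w j\<bar> \<le> c * (e / 2)" using c by (simp add: abs_mult)
    then show ?thesis using c(1) by (simp add: mult_le_cancel_left_pos)
  qed
  then show ?thesis using that by blast
qed

lemma zone_lin_perturbation_bound:
  obtains C where "0 \<le> C" "\<forall>w err E. feasible_direction d mstar w
      \<longrightarrow> (\<forall>j\<in>{1..d}. w j = Lstar w j + err j) \<longrightarrow> (\<forall>j\<in>{1..d}. \<bar>err j\<bar> \<le> E)
      \<longrightarrow> (\<forall>j\<in>{1..d}. \<bar>w j\<bar> \<le> C * E)"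
proof -
  obtain k where contraction: "\<forall>w e. feasible_direction d mstar w \<longrightarrow> 0 < e
      \<longrightarrow> (\<forall>i\<in>{1..d}. \<bar>w i\<bar> \<le> e) \<longrightarrow> (\<forall>j\<in>{1..d}. \<bar>(Lstar ^^ k) w j\<bar> \<le> e / 2)"
    by (rule local_contraction)
  define C where "C = 2 * real k * (4 * real d) ^ k"
  have "\<forall>j\<in>{1..d}. \<bar>w j\<bar> \<le> C * E"
    if w: "feasible_direction d mstar w" and eq: "\<forall>j\<in>{1..d}. w j = Lstar w j + err j"
      and err: "\<forall>j\<in>{1..d}. \<bar>err j\<bar> \<le> E" for w err E
  proof -
    have E: "0 \<le> E" using err d_ge_1 by force
    define M where "M = Max ((\<lambda>j. \<bar>w j\<bar>) ` {1..d})"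
    have M: "\<forall>j\<in>{1..d}. \<bar>w j\<bar> \<le> M" by (simp add: M_def)
    have "M \<in> (\<lambda>j. \<bar>w j\<bar>) ` {1..d}" unfolding M_def using d_ge_1 by (intro Max_in) auto
    then obtain j0 where j0: "j0 \<in> {1..d}" "M = \<bar>w j0\<bar>" by auto
    have "M \<le> C * E"
    proof (cases "M = 0")
      case True then show ?thesis using E by (simp add: C_def)
    next
      case False
      then have "\<bar>(Lstar ^^ k) w j0\<bar> \<le> M / 2" using contraction w M j0 by force
      moreover have "w j0 = (Lstar ^^ k) w j0 + (\<Sum>i<k. (Lstar ^^ i) err j0)"
        by (rule zone_lin_fixed_point_unfold[OF sstar_range eq j0(1)])
      moreover have "\<bar>\<Sum>i<k. (Lstar ^^ i) err j0\<bar> \<le> real k * (4 * real d) ^ k * E"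
        by (rule funpow_zone_lin_sum_bound[OF sstar_range err E j0(1)])
      ultimately show ?thesis using j0 unfolding C_def by linarith
    qed
    then show ?thesis using M by fastforce
  qed
  then show ?thesis using that[of C] by (simp add: C_def)
qed

lemma phi_zone_error:
  assumes m: "m \<in> simplex_d d" and j: "j \<in> {1..d}"
  shows "\<bar>\<Phi> m j - (mstar j + Lstar (\<lambda>i. m i - mstar i) j)\<bar>
    \<le> (if s_of d \<alpha> m = sstar then 0 else 4 * real d + 2)"
proof (cases "s_of d \<alpha> m = sstar")
  case True then show ?thesis using phi_in_zone[OF True j] by simp
next
  case False
  have "\<forall>i\<in>{1..d}. \<bar>m i - mstar i\<bar> \<le> 1"
    using simplex_abs_diff_le_1[OF m mstar_simplex] by blast
  then have "\<bar>Lstar (\<lambda>i. m i - mstar i) j\<bar> \<le> 4 * real d * 1"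
    by (intro zone_lin_bound[OF sstar_range _ _ j]) auto
  moreover have "\<bar>\<Phi> m j\<bar> \<le> 1" "\<bar>mstar j\<bar> \<le> 1"
    using simplex_abs_le_1[OF phi_simplex[OF m] j] simplex_abs_le_1[OF mstar_simplex j] .
  ultimately show ?thesis using False by (simp add: abs_le_iff)
qed

end

section \<open>Sub-Gaussian counts\<close>

lemma exp_le_1_plus_x_plus_sq:
  fixes x :: real
  assumes "\<bar>x\<bar> \<le> 1"
  shows "exp x \<le> 1 + x + x\<^sup>2"
proof (cases "0 \<le> x")
  case True then show ?thesis using exp_bound[of x] assms by simp
next
  case False
  have "1 - x \<le> exp (- x)" using exp_ge_add_one_self[of "-x"] by simp
  then have "exp x \<le> 1 / (1 - x)" using False by (simp add: exp_minus field_simps)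
  also have "\<dots> \<le> 1 + x + x\<^sup>2"
  proof -
    have "(1 - x) * (1 + x + x\<^sup>2) = 1 - x * x\<^sup>2" by (simp add: algebra_simps power2_eq_square)
    moreover have "x * x\<^sup>2 \<le> 0" using False by (intro mult_nonpos_nonneg) auto
    ultimately show ?thesis using False by (simp add: field_simps)
  qed
  finally show ?thesis .
qed

lemma bernoulli_mgf_le:
  fixes q l :: real
  assumes "0 \<le> q" "q \<le> 1" "\<bar>l\<bar> \<le> 1"
  shows "1 + (exp l - 1) * q \<le> exp (l * q + l\<^sup>2)"
proof -
  have "(exp l - 1) * q \<le> (l + l\<^sup>2) * q"
    using exp_le_1_plus_x_plus_sq[OF assms(3)] assms by (intro mult_right_mono) auto
  also have "\<dots> \<le> l * q + l\<^sup>2"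
    using mult_left_le_one_le[of "l\<^sup>2" q] assms by (simp add: algebra_simps)
  finally show ?thesis using exp_ge_add_one_self[of "l * q + l\<^sup>2"] by linarith
qed

lemma expectation_bind_pmf_finite:
  fixes h :: "'b \<Rightarrow> real"
  assumes "finite (set_pmf p)" "\<And>x. x \<in> set_pmf p \<Longrightarrow> finite (set_pmf (f x))"
  shows "measure_pmf.expectation (bind_pmf p f) h
    = measure_pmf.expectation p (\<lambda>x. measure_pmf.expectation (f x) h)"
proof -
  have "measure_pmf.expectation (bind_pmf p f) h
      = (\<Sum>a\<in>set_pmf p. pmf p a *\<^sub>R measure_pmf.expectation (f a) h)"
    using assms by (intro pmf_expectation_bind) auto
  also have "\<dots> = measure_pmf.expectation p (\<lambda>x. measure_pmf.expectation (f x) h)"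
    using assms by (subst integral_measure_pmf[of "set_pmf p"]) auto
  finally show ?thesis .
qed

lemma expectation_mono_pmf_finite:
  fixes F G :: "'a \<Rightarrow> real"
  assumes "finite (set_pmf p)" "\<And>x. x \<in> set_pmf p \<Longrightarrow> F x \<le> G x"
  shows "measure_pmf.expectation p F \<le> measure_pmf.expectation p G"
  using assms
  by (intro integral_mono_AE) (auto simp: AE_measure_pmf_iff intro: integrable_measure_pmf_finite)

lemma expectation_cong_pmf:
  fixes F G :: "'a \<Rightarrow> real"
  assumes "\<And>x. x \<in> set_pmf p \<Longrightarrow> F x = G x"
  shows "measure_pmf.expectation p F = measure_pmf.expectation p G"
  using assms by (intro integral_cong_AE) (auto simp: AE_measure_pmf_iff)

lemma expectation_add_pmf_finite:
  fixes F G :: "'a \<Rightarrow> real"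
  assumes "finite (set_pmf p)"
  shows "measure_pmf.expectation p (\<lambda>x. F x + G x)
    = measure_pmf.expectation p F + measure_pmf.expectation p G"
  using assms by (intro Bochner_Integration.integral_add) (auto intro: integrable_measure_pmf_finite)

lemma abs_expectation_le_pmf_finite:
  fixes F G :: "'a \<Rightarrow> real"
  assumes fin: "finite (set_pmf p)" and bound: "\<And>x. x \<in> set_pmf p \<Longrightarrow> \<bar>F x\<bar> \<le> G x"
  shows "\<bar>measure_pmf.expectation p F\<bar> \<le> measure_pmf.expectation p G"
proof -
  have "measure_pmf.expectation p F \<le> measure_pmf.expectation p G"
    "measure_pmf.expectation p (\<lambda>x. - F x) \<le> measure_pmf.expectation p G"
    using bound by (intro expectation_mono_pmf_finite[OF fin]; force simp: abs_le_iff)+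
  then show ?thesis by (simp add: abs_le_iff)
qed

lemma prob_bind_pmf_le:
  assumes fin: "finite (set_pmf p)" "\<And>x. x \<in> set_pmf p \<Longrightarrow> finite (set_pmf (f x))"
    and bound: "\<And>x. x \<in> set_pmf p \<Longrightarrow> x \<notin> G \<Longrightarrow> measure_pmf.prob (f x) B \<le> c" and "0 \<le> c"
  shows "measure_pmf.prob (bind_pmf p f) B \<le> measure_pmf.prob p G + c"
proof -
  have "measure_pmf.prob (bind_pmf p f) B
      = measure_pmf.expectation p (\<lambda>x. measure_pmf.prob (f x) B)"
    using expectation_bind_pmf_finite[OF fin, where h = "indicator B"] by simp
  also have "\<dots> \<le> measure_pmf.expectation p (\<lambda>x. indicator G x + c)"
  proof (rule expectation_mono_pmf_finite[OF fin(1)])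
    fix x assume "x \<in> set_pmf p"
    moreover have "measure_pmf.prob (f x) B \<le> 1" by (rule measure_pmf.prob_le_1)
    ultimately show "measure_pmf.prob (f x) B \<le> indicator G x + c"
      using bound \<open>0 \<le> c\<close> by (cases "x \<in> G") (auto intro: add_increasing2)
  qed
  also have "\<dots> = measure_pmf.prob p G + c" using fin by (simp add: expectation_add_pmf_finite)
  finally show ?thesis .
qed

text \<open>The moment bound is only required for \<open>\<bar>l\<bar> \<le> 1\<close>: this suffices for deviations
  \<open>\<delta> k\<close> with \<open>\<delta> \<le> 2\<close>, and a sum of \<open>k\<close> Bernoulli variables satisfies it.\<close>
definition subgaussian_pmf :: "'a pmf \<Rightarrow> ('a \<Rightarrow> real) \<Rightarrow> real \<Rightarrow> real \<Rightarrow> bool" where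
  "subgaussian_pmf p X \<mu> k \<longleftrightarrow> finite (set_pmf p) \<and> measure_pmf.expectation p X = \<mu> \<and>
     (\<forall>l. \<bar>l\<bar> \<le> 1 \<longrightarrow> measure_pmf.expectation p (\<lambda>x. exp (l * X x)) \<le> exp (l * \<mu> + k * l\<^sup>2))"

lemma subgaussian_return: "subgaussian_pmf (return_pmf x) X (X x) 0"
  by (simp add: subgaussian_pmf_def)

lemma subgaussian_map_pmf:
  "subgaussian_pmf p (\<lambda>x. X (f x)) \<mu> k \<Longrightarrow> subgaussian_pmf (map_pmf f p) X \<mu> k"
  by (simp add: subgaussian_pmf_def)

lemma subgaussian_indicator:
  assumes fin: "finite (set_pmf p)"
  shows "subgaussian_pmf p (indicator A) (measure_pmf.prob p A) 1"
proof -
  have "measure_pmf.expectation p (\<lambda>x. exp (l * indicator A x))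
      \<le> exp (l * measure_pmf.prob p A + 1 * l\<^sup>2)" if "\<bar>l\<bar> \<le> 1" for l
  proof -
    have "measure_pmf.expectation p (\<lambda>x. exp (l * indicator A x))
        = measure_pmf.expectation p (\<lambda>x. 1 + (exp l - 1) * indicator A x)"
      by (intro expectation_cong_pmf) (simp add: indicator_def)
    also have "\<dots> = 1 + (exp l - 1) * measure_pmf.prob p A"
      using fin by (simp add: expectation_add_pmf_finite)
    also have "\<dots> \<le> exp (l * measure_pmf.prob p A + l\<^sup>2)"
      using that by (intro bernoulli_mgf_le) auto
    finally show ?thesis by simp
  qed
  then show ?thesis using fin by (simp add: subgaussian_pmf_def)
qed

lemma subgaussian_add_counts:
  assumes p: "subgaussian_pmf p (\<lambda>x. real (x j)) \<mu>1 k1"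
    and q: "subgaussian_pmf q (\<lambda>x. real (x j)) \<mu>2 k2"
  shows "subgaussian_pmf (add_counts p q) (\<lambda>x. real (x j)) (\<mu>1 + \<mu>2) (k1 + k2)"
proof -
  have fp: "finite (set_pmf p)" and fq: "finite (set_pmf q)"
    using p q by (auto simp: subgaussian_pmf_def)
  have E: "measure_pmf.expectation (add_counts p q) h
      = measure_pmf.expectation p (\<lambda>x. measure_pmf.expectation q (\<lambda>y. h (\<lambda>j. x j + y j)))"
    for h :: "_ \<Rightarrow> real"
    unfolding add_counts_def using fp fq by (subst expectation_bind_pmf_finite) auto
  have "measure_pmf.expectation (add_counts p q) (\<lambda>x. real (x j))
      = measure_pmf.expectation p (\<lambda>x. real (x j) + \<mu>2)"
    unfolding E using fq q by (intro expectation_cong_pmf) (simp add: expectation_add_pmf_finite subgaussian_pmf_def)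
  also have "\<dots> = \<mu>1 + \<mu>2" using p fp by (simp add: subgaussian_pmf_def expectation_add_pmf_finite)
  finally have mean: "measure_pmf.expectation (add_counts p q) (\<lambda>x. real (x j)) = \<mu>1 + \<mu>2" .
  have "measure_pmf.expectation (add_counts p q) (\<lambda>x. exp (l * real (x j)))
      \<le> exp (l * (\<mu>1 + \<mu>2) + (k1 + k2) * l\<^sup>2)" if l: "\<bar>l\<bar> \<le> 1" for l
  proof -
    let ?C = "measure_pmf.expectation q (\<lambda>y. exp (l * real (y j)))"
    have "measure_pmf.expectation (add_counts p q) (\<lambda>x. exp (l * real (x j)))
        = measure_pmf.expectation p (\<lambda>x. exp (l * real (x j))) * ?C"
      unfolding E by (simp add: distrib_left exp_add)
    also have "\<dots> \<le> exp (l * \<mu>1 + k1 * l\<^sup>2) * exp (l * \<mu>2 + k2 * l\<^sup>2)"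
      using p q l by (intro mult_mono) (auto simp: subgaussian_pmf_def intro: integral_nonneg_AE)
    also have "\<dots> = exp (l * (\<mu>1 + \<mu>2) + (k1 + k2) * l\<^sup>2)"
      by (simp add: exp_add[symmetric] algebra_simps)
    finally show ?thesis .
  qed
  then show ?thesis using mean fp fq by (simp add: subgaussian_pmf_def add_counts_def)
qed

lemma sample_counts_Suc_add_counts:
  "sample_counts (Suc k) p = add_counts (sample_counts k p) (map_pmf (\<lambda>j' z. if z = j' then 1 else 0) p)"
proof -
  have "(\<lambda>j'. c(j' := c j' + 1)) = (\<lambda>j'. (\<lambda>j. c j + (if j = j' then 1 else 0)))" for c :: "nat \<Rightarrow> nat"
    by (intro ext) auto
  then show ?thesis unfolding add_counts_def by (simp add: map_pmf_comp)
qed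

lemma subgaussian_sample_counts:
  assumes fin: "finite (set_pmf p)"
  shows "subgaussian_pmf (sample_counts k p) (\<lambda>x. real (x j)) (real k * pmf p j) (real k)"
proof (induction k)
  case 0 then show ?case using subgaussian_return[of "\<lambda>_. 0" "\<lambda>x. real (x j)"] by simp
next
  case (Suc k)
  have "(\<lambda>j'. real ((\<lambda>z. if z = j' then 1 else 0) j)) = indicator {j}"
    by (auto simp: indicator_def)
  then have "subgaussian_pmf (map_pmf (\<lambda>j' z. if z = j' then 1 else 0) p) (\<lambda>x. real (x j)) (pmf p j) 1"
    using subgaussian_indicator[OF fin, of "{j}"] by (intro subgaussian_map_pmf) (simp add: measure_pmf_single)
  then have "subgaussian_pmf (sample_counts (Suc k) p) (\<lambda>x. real (x j))
      (real k * pmf p j + pmf p j) (real k + 1)"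
    unfolding sample_counts_Suc_add_counts by (rule subgaussian_add_counts[OF Suc])
  then show ?case by (simp add: algebra_simps)
qed

lemma subgaussian_chernoff:
  assumes X: "subgaussian_pmf p X \<mu> k" and l: "\<bar>l\<bar> \<le> 1"
  shows "measure_pmf.prob p {x. t \<le> l * (X x - \<mu>)} \<le> exp (k * l\<^sup>2 - t)"
proof -
  have fin: "finite (set_pmf p)" using X by (simp add: subgaussian_pmf_def)
  have "measure_pmf.prob p {x. t \<le> l * (X x - \<mu>)}
      = measure_pmf.expectation p (indicator {x. t \<le> l * (X x - \<mu>)})" by simp
  also have "\<dots> \<le> measure_pmf.expectation p (\<lambda>x. exp (l * X x) * exp (- l * \<mu> - t))"
  proof (rule expectation_mono_pmf_finite[OF fin])
    fix x
    have "indicator {x. t \<le> l * (X x - \<mu>)} x \<le> exp (l * (X x - \<mu>) - t)"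
      by (auto simp: indicator_def)
    also have "\<dots> = exp (l * X x) * exp (- l * \<mu> - t)" by (simp add: exp_add[symmetric] algebra_simps)
    finally show "indicator {x. t \<le> l * (X x - \<mu>)} x \<le> exp (l * X x) * exp (- l * \<mu> - t)" .
  qed
  also have "\<dots> = measure_pmf.expectation p (\<lambda>x. exp (l * X x)) * exp (- l * \<mu> - t)" by simp
  also have "\<dots> \<le> exp (l * \<mu> + k * l\<^sup>2) * exp (- l * \<mu> - t)"
    using X l by (intro mult_right_mono) (auto simp: subgaussian_pmf_def)
  also have "\<dots> = exp (k * l\<^sup>2 - t)" by (simp add: exp_add[symmetric] algebra_simps)
  finally show ?thesis .
qed

lemma subgaussian_tail:
  assumes X: "subgaussian_pmf p X \<mu> k" and \<delta>: "0 < \<delta>" "\<delta> \<le> 2"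
  shows "measure_pmf.prob p {x. \<delta> * k \<le> \<bar>X x - \<mu>\<bar>} \<le> 2 * exp (- (\<delta>\<^sup>2 * k / 4))"
proof -
  let ?U = "\<lambda>l. {x. \<delta>\<^sup>2 * k / 2 \<le> l * (X x - \<mu>)}"
  have tail: "measure_pmf.prob p (?U l) \<le> exp (- (\<delta>\<^sup>2 * k / 4))" if "l = \<delta> / 2 \<or> l = - \<delta> / 2" for l
  proof -
    have sq: "l\<^sup>2 = \<delta>\<^sup>2 / 4" using that by (auto simp: power2_eq_square)
    have "\<bar>l\<bar> \<le> 1" using that \<delta> by auto
    moreover have "k * l\<^sup>2 - \<delta>\<^sup>2 * k / 2 = - (\<delta>\<^sup>2 * k / 4)" unfolding sq by (simp add: field_simps)
    ultimately show ?thesis using subgaussian_chernoff[OF X, of l "\<delta>\<^sup>2 * k / 2"] by simp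
  qed
  have "{x. \<delta> * k \<le> \<bar>X x - \<mu>\<bar>} \<subseteq> ?U (\<delta> / 2) \<union> ?U (- \<delta> / 2)"
  proof
    fix x assume "x \<in> {x. \<delta> * k \<le> \<bar>X x - \<mu>\<bar>}"
    then have "(\<delta> / 2) * (\<delta> * k) \<le> (\<delta> / 2) * \<bar>X x - \<mu>\<bar>" using \<delta> by (intro mult_left_mono) auto
    then show "x \<in> ?U (\<delta> / 2) \<union> ?U (- \<delta> / 2)"
      by (cases "0 \<le> X x - \<mu>") (auto simp: power2_eq_square field_simps)
  qed
  then have "measure_pmf.prob p {x. \<delta> * k \<le> \<bar>X x - \<mu>\<bar>} \<le> measure_pmf.prob p (?U (\<delta> / 2) \<union> ?U (- \<delta> / 2))"
    by (intro measure_pmf.finite_measure_mono) auto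
  also have "\<dots> \<le> measure_pmf.prob p (?U (\<delta> / 2)) + measure_pmf.prob p (?U (- \<delta> / 2))"
    by (rule measure_Un_le) auto
  also have "\<dots> \<le> 2 * exp (- (\<delta>\<^sup>2 * k / 4))" using tail[of "\<delta> / 2"] tail[of "- \<delta> / 2"] by simp
  finally show ?thesis .
qed

section \<open>The configuration chain under WIP\<close>

lemma pmf_row_pmf:
  assumes P: "stochastic d P" and i: "i \<in> {1..d}"
  shows "pmf (row_pmf d P i) j = (if j \<in> {1..d} then P i j else 0)"
proof -
  let ?f = "\<lambda>j. if j \<in> {1..d} then P i j else 0"
  have "(\<integral>\<^sup>+x. ennreal (?f x) \<partial>count_space UNIV) = (\<Sum>a\<in>{1..d}. ennreal (?f a))"
    by (rule nn_integral_count_space') auto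
  also have "\<dots> = ennreal (\<Sum>a\<in>{1..d}. ?f a)"
    using stochastic_nonneg[OF P i] by (intro sum_ennreal) auto
  also have "(\<Sum>a\<in>{1..d}. ?f a) = 1" using stochastic_row_sum[OF P i] by simp
  finally show ?thesis
    unfolding row_pmf_def using stochastic_nonneg[OF P i] by (intro pmf_embed_pmf) auto
qed

lemma set_pmf_row_pmf: "stochastic d P \<Longrightarrow> i \<in> {1..d} \<Longrightarrow> set_pmf (row_pmf d P i) \<subseteq> {1..d}"
  by (auto simp: set_pmf_eq pmf_row_pmf split: if_splits)

lemma finite_config_space: "finite (config_space d N)"
proof -
  have "config_space d N \<subseteq> {f. \<forall>x. (x \<in> {1..d} \<longrightarrow> f x \<in> {0..N}) \<and> (x \<notin> {1..d} \<longrightarrow> f x = 0)}"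
    using member_le_sum[of _ "{1..d}"] by (fastforce simp: config_space_def)
  then show ?thesis by (rule finite_subset) (rule finite_set_of_finite_funs; simp)
qed

lemma set_pmf_add_counts:
  assumes "set_pmf p \<subseteq> config_space d K1" "set_pmf q \<subseteq> config_space d K2"
  shows "set_pmf (add_counts p q) \<subseteq> config_space d (K1 + K2)"
proof
  fix z assume "z \<in> set_pmf (add_counts p q)"
  then obtain x y where "x \<in> config_space d K1" "y \<in> config_space d K2" "z = (\<lambda>j. x j + y j)"
    using assms by (auto simp: add_counts_def)
  then show "z \<in> config_space d (K1 + K2)" by (simp add: config_space_def sum.distrib)
qed

lemma set_pmf_sample_counts:
  assumes "set_pmf p \<subseteq> {1..d}"
  shows "set_pmf (sample_counts k p) \<subseteq> config_space d k"
proof (induction k)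
  case 0 then show ?case by (simp add: config_space_def)
next
  case (Suc k)
  have "set_pmf (map_pmf (\<lambda>j' z. if z = j' then 1 else 0) p) \<subseteq> config_space d 1"
    using assms by (auto simp: config_space_def)
  then show ?case unfolding sample_counts_Suc_add_counts using set_pmf_add_counts[OF Suc, of _ 1] by simp
qed

lemma set_pmf_foldr_add_counts:
  assumes "\<forall>i\<in>set xs. set_pmf (f i) \<subseteq> config_space d (K i)"
  shows "set_pmf (foldr (\<lambda>i acc. add_counts acc (f i)) xs (return_pmf (\<lambda>_. 0)))
    \<subseteq> config_space d (\<Sum>i\<leftarrow>xs. K i)"
  using assms
proof (induction xs)
  case Nil then show ?case by (simp add: config_space_def)
next
  case (Cons i xs)
  then show ?case using set_pmf_add_counts[of _ d "\<Sum>i\<leftarrow>xs. K i" "f i" "K i"] by (simp add: add.commute)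
qed

lemma subgaussian_foldr_add_counts:
  assumes "\<forall>i\<in>set xs. subgaussian_pmf (f i) (\<lambda>x. real (x j)) (\<mu> i) (k i)"
  shows "subgaussian_pmf (foldr (\<lambda>i acc. add_counts acc (f i)) xs (return_pmf (\<lambda>_. 0)))
    (\<lambda>x. real (x j)) (\<Sum>i\<leftarrow>xs. \<mu> i) (\<Sum>i\<leftarrow>xs. k i)"
  using assms
proof (induction xs)
  case Nil then show ?case using subgaussian_return[of "\<lambda>_. 0" "\<lambda>x. real (x j)"] by simp
next
  case (Cons i xs)
  then show ?case
    using subgaussian_add_counts[of _ j "\<Sum>i\<leftarrow>xs. \<mu> i" "\<Sum>i\<leftarrow>xs. k i" "f i" "\<mu> i" "k i"]
    by (simp add: add.commute)
qed

lemma sum_list_upt_eq_sum: "(\<Sum>i\<leftarrow>[1..<d+1]. f i) = (\<Sum>i=1..d. f i)"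
proof -
  have "set [1..<d+1] = {1..d}" by auto
  then show ?thesis by (simp only: sum_set_upt_conv_sum_list_nat[symmetric])
qed

lemma frac_simplex:
  assumes N: "0 < N" and n: "n \<in> config_space d N"
  shows "frac N n \<in> simplex_d d"
proof (rule simplexI)
  have "(\<Sum>i=1..d. real (n i)) = real N" using n by (simp add: config_space_def flip: of_nat_sum)
  then show "(\<Sum>i=1..d. frac N n i) = 1" using N by (simp add: frac_def flip: sum_divide_distrib)
qed (simp add: frac_def)

lemma n_active_le: "n_active A n i \<le> n i"
  by (simp add: n_active_def)

lemma n_active_eq_active_frac:
  assumes N: "0 < N" and A: "real A = \<alpha> * real N"
  shows "real (n_active A n i) = real N * active_frac \<alpha> (frac N n) i"
proof -
  define S where "S = (\<Sum>k\<in>{1..<i}. n k)"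
  have "(\<Sum>k\<in>{1..<i}. frac N n k) = real S / real N"
    unfolding frac_def S_def by (simp add: sum_divide_distrib)
  then have "real N * active_frac \<alpha> (frac N n) i
      = real N * min (real (n i) / real N) (max 0 (\<alpha> - real S / real N))"
    unfolding active_frac_def by (simp add: frac_def)
  also have "\<dots> = min (real (n i)) (max 0 (real A - real S))"
    using N A by (simp add: min_mult_distrib_left max_mult_distrib_left right_diff_distrib mult.commute)
  also have "\<dots> = real (n_active A n i)"
    unfolding n_active_def S_def[symmetric] by (cases "S \<le> A") (auto simp: min_def max_def)
  finally show ?thesis by simp
qed

fun kernel_iter :: "('a \<Rightarrow> 'a pmf) \<Rightarrow> nat \<Rightarrow> 'a \<Rightarrow> 'a pmf" where
  "kernel_iter K 0 x = return_pmf x"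
| "kernel_iter K (Suc t) x = bind_pmf (K x) (kernel_iter K t)"

lemma set_pmf_kernel_iter:
  assumes "\<forall>x\<in>C. set_pmf (K x) \<subseteq> C" "x \<in> C"
  shows "set_pmf (kernel_iter K t x) \<subseteq> C"
  using assms(2) by (induction t arbitrary: x) (use assms(1) in auto)

lemma bind_kernel_iter_stationary:
  assumes "bind_pmf \<mu> K = \<mu>"
  shows "bind_pmf \<mu> (kernel_iter K t) = \<mu>"
proof (induction t)
  case (Suc t)
  have "kernel_iter K (Suc t) = (\<lambda>x. bind_pmf (K x) (kernel_iter K t))" by (rule ext) simp
  then have "bind_pmf \<mu> (kernel_iter K (Suc t)) = bind_pmf (bind_pmf \<mu> K) (kernel_iter K t)"
    by (simp add: bind_assoc_pmf)
  also have "\<dots> = \<mu>" using Suc assms by simp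
  finally show ?case .
qed (simp add: bind_return_pmf')

context mean_field_model
begin

lemma subgaussian_wip_step_state:
  assumes i: "i \<in> {1..d}" and j: "j \<in> {1..d}"
  shows "subgaussian_pmf
      (add_counts (sample_counts (n_active A n i) (row_pmf d P1 i))
                  (sample_counts (n i - n_active A n i) (row_pmf d P0 i)))
      (\<lambda>x. real (x j)) (real (n_active A n i) * P1 i j + real (n i - n_active A n i) * P0 i j)
      (real (n i))"
proof -
  have "finite (set_pmf (row_pmf d P i))" if "stochastic d P" for P
    using set_pmf_row_pmf[OF that i] finite_subset by blast
  then have "subgaussian_pmf
      (add_counts (sample_counts (n_active A n i) (row_pmf d P1 i))
                  (sample_counts (n i - n_active A n i) (row_pmf d P0 i)))
      (\<lambda>x. real (x j))
      (real (n_active A n i) * pmf (row_pmf d P1 i) j + real (n i - n_active A n i) * pmf (row_pmf d P0 i) j)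
      (real (n_active A n i) + real (n i - n_active A n i))"
    using stochastic_P0 stochastic_P1 by (intro subgaussian_add_counts subgaussian_sample_counts) auto
  then show ?thesis
    using pmf_row_pmf[OF stochastic_P0 i] pmf_row_pmf[OF stochastic_P1 i] j n_active_le[of A n i]
    by (simp flip: of_nat_add)
qed

lemma wip_step_mean:
  assumes N: "0 < N" and A: "real A = \<alpha> * real N" and n: "n \<in> config_space d N"
  shows "(\<Sum>i=1..d. real (n_active A n i) * P1 i j + real (n i - n_active A n i) * P0 i j)
    = real N * \<Phi> (frac N n) j"
proof -
  have passive_count: "real (n i - n_active A n i) = real N * (frac N n i - active_frac \<alpha> (frac N n) i)" for i
    using n_active_eq_active_frac[OF N A, of n i] n_active_le[of A n i] N
    by (simp add: frac_def right_diff_distrib)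
  have "(\<Sum>i=1..d. real (n_active A n i) * P1 i j + real (n i - n_active A n i) * P0 i j)
      = (\<Sum>i=1..d. real N * (active_frac \<alpha> (frac N n) i * P1 i j
          + (frac N n i - active_frac \<alpha> (frac N n) i) * P0 i j))"
    by (rule sum.cong) (simp_all only: passive_count n_active_eq_active_frac[OF N A] distrib_left mult.assoc)
  also have "\<dots> = real N * phi_act d P0 P1 \<alpha> (frac N n) j"
    unfolding phi_act_def by (simp add: sum_distrib_left)
  finally have "(\<Sum>i=1..d. real (n_active A n i) * P1 i j + real (n i - n_active A n i) * P0 i j)
      = real N * phi_act d P0 P1 \<alpha> (frac N n) j" .
  then show ?thesis
    using phi_eq_phi_act[OF frac_simplex[OF N n]] alpha_pos alpha_less_1 by simp
qed

lemma subgaussian_wip_step: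
  assumes N: "0 < N" and A: "real A = \<alpha> * real N" and n: "n \<in> config_space d N"
    and j: "j \<in> {1..d}"
  shows "subgaussian_pmf (wip_step d P0 P1 A n) (\<lambda>x. real (x j)) (real N * \<Phi> (frac N n) j) (real N)"
proof -
  have "subgaussian_pmf (wip_step d P0 P1 A n) (\<lambda>x. real (x j))
      (\<Sum>i\<leftarrow>[1..<d+1]. real (n_active A n i) * P1 i j + real (n i - n_active A n i) * P0 i j)
      (\<Sum>i\<leftarrow>[1..<d+1]. real (n i))"
    unfolding wip_step_def using subgaussian_wip_step_state[OF _ j]
    by (intro subgaussian_foldr_add_counts) auto
  moreover have "(\<Sum>i=1..d. real (n i)) = real N" using n by (simp add: config_space_def flip: of_nat_sum)
  ultimately show ?thesis unfolding sum_list_upt_eq_sum wip_step_mean[OF N A n] by simp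
qed

lemma set_pmf_wip_step:
  assumes n: "n \<in> config_space d N"
  shows "set_pmf (wip_step d P0 P1 A n) \<subseteq> config_space d N"
proof -
  have state: "set_pmf (add_counts (sample_counts (n_active A n i) (row_pmf d P1 i))
      (sample_counts (n i - n_active A n i) (row_pmf d P0 i))) \<subseteq> config_space d (n i)"
    if i: "i \<in> {1..d}" for i
  proof -
    have "set_pmf (add_counts (sample_counts (n_active A n i) (row_pmf d P1 i))
        (sample_counts (n i - n_active A n i) (row_pmf d P0 i)))
        \<subseteq> config_space d (n_active A n i + (n i - n_active A n i))"
      by (intro set_pmf_add_counts set_pmf_sample_counts set_pmf_row_pmf stochastic_P0 stochastic_P1 i)
    then show ?thesis using n_active_le[of A n i] by simp
  qed
  moreover have "i \<in> set [1..<d+1] \<Longrightarrow> i \<in> {1..d}" for i by auto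
  ultimately have "set_pmf (wip_step d P0 P1 A n) \<subseteq> config_space d (\<Sum>i\<leftarrow>[1..<d+1]. n i)"
    unfolding wip_step_def by (intro set_pmf_foldr_add_counts) blast
  moreover have "(\<Sum>i\<leftarrow>[1..<d+1]. n i) = N"
    using n unfolding sum_list_upt_eq_sum by (simp add: config_space_def)
  ultimately show ?thesis by simp
qed

lemma finite_set_pmf_wip_step: "n \<in> config_space d N \<Longrightarrow> finite (set_pmf (wip_step d P0 P1 A n))"
  by (rule finite_subset[OF set_pmf_wip_step finite_config_space])

lemma set_pmf_kernel_iter_wip_step:
  "n \<in> config_space d N \<Longrightarrow> set_pmf (kernel_iter (wip_step d P0 P1 A) t n) \<subseteq> config_space d N"
  by (rule set_pmf_kernel_iter) (use set_pmf_wip_step in blast)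

lemma finite_set_pmf_kernel_iter_wip_step:
  "n \<in> config_space d N \<Longrightarrow> finite (set_pmf (kernel_iter (wip_step d P0 P1 A) t n))"
  by (rule finite_subset[OF set_pmf_kernel_iter_wip_step finite_config_space])

lemma wip_step_deviation:
  assumes N: "0 < N" and A: "real A = \<alpha> * real N" and n: "n \<in> config_space d N"
    and \<delta>: "0 < \<delta>" "\<delta> \<le> 2"
  shows "measure_pmf.prob (wip_step d P0 P1 A n)
      {x. \<exists>j\<in>{1..d}. \<delta> < \<bar>frac N x j - \<Phi> (frac N n) j\<bar>}
    \<le> real d * (2 * exp (- (\<delta>\<^sup>2 * real N / 4)))"
proof -
  let ?q = "wip_step d P0 P1 A n"
  let ?F = "\<lambda>j. {x. \<delta> * real N \<le> \<bar>real (x j) - real N * \<Phi> (frac N n) j\<bar>}"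
  have "{x. \<exists>j\<in>{1..d}. \<delta> < \<bar>frac N x j - \<Phi> (frac N n) j\<bar>} \<subseteq> (\<Union>j\<in>{1..d}. ?F j)"
  proof
    fix x assume "x \<in> {x. \<exists>j\<in>{1..d}. \<delta> < \<bar>frac N x j - \<Phi> (frac N n) j\<bar>}"
    then obtain j where j: "j \<in> {1..d}" and dev: "\<delta> < \<bar>frac N x j - \<Phi> (frac N n) j\<bar>" by auto
    have "frac N x j - \<Phi> (frac N n) j = (real (x j) - real N * \<Phi> (frac N n) j) / real N"
      using N by (simp add: frac_def field_simps)
    then have "\<bar>frac N x j - \<Phi> (frac N n) j\<bar> * real N = \<bar>real (x j) - real N * \<Phi> (frac N n) j\<bar>"
      using N by simp
    moreover have "\<delta> * real N \<le> \<bar>frac N x j - \<Phi> (frac N n) j\<bar> * real N"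
      using dev N by (intro mult_right_mono) auto
    ultimately have "\<delta> * real N \<le> \<bar>real (x j) - real N * \<Phi> (frac N n) j\<bar>" by simp
    then show "x \<in> (\<Union>j\<in>{1..d}. ?F j)" using j by blast
  qed
  then have "measure_pmf.prob ?q {x. \<exists>j\<in>{1..d}. \<delta> < \<bar>frac N x j - \<Phi> (frac N n) j\<bar>}
      \<le> measure_pmf.prob ?q (\<Union>j\<in>{1..d}. ?F j)"
    by (intro measure_pmf.finite_measure_mono) auto
  also have "\<dots> \<le> (\<Sum>j\<in>{1..d}. measure_pmf.prob ?q (?F j))"
    by (rule measure_UNION_le) auto
  also have "\<dots> \<le> (\<Sum>j\<in>{1..d}. 2 * exp (- (\<delta>\<^sup>2 * real N / 4)))"
    by (intro sum_mono subgaussian_tail[OF subgaussian_wip_step[OF N A n] \<delta>])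
  finally show ?thesis by simp
qed

lemma deviation_set_Suc_subset:
  fixes g :: "'a \<Rightarrow> nat \<Rightarrow> real"
  assumes m: "m \<in> simplex_d d" and m': "m' \<in> simplex_d d"
    and close: "\<forall>k\<in>{1..d}. \<bar>m' k - \<Phi> m k\<bar> \<le> \<delta>" and "0 \<le> \<delta>"
  shows "{x. \<exists>j\<in>{1..d}. \<delta> * (\<Sum>s<Suc t. lip ^ s) < \<bar>g x j - (\<Phi> ^^ Suc t) m j\<bar>}
    \<subseteq> {x. \<exists>j\<in>{1..d}. \<delta> * (\<Sum>s<t. lip ^ s) < \<bar>g x j - (\<Phi> ^^ t) m' j\<bar>}"
proof (rule subsetI, rule ccontr)
  fix x
  assume "x \<in> {x. \<exists>j\<in>{1..d}. \<delta> * (\<Sum>s<Suc t. lip ^ s) < \<bar>g x j - (\<Phi> ^^ Suc t) m j\<bar>}"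
  then obtain j where j: "j \<in> {1..d}"
    and far: "\<delta> * (\<Sum>s<Suc t. lip ^ s) < \<bar>g x j - (\<Phi> ^^ Suc t) m j\<bar>" by blast
  assume "x \<notin> {x. \<exists>j\<in>{1..d}. \<delta> * (\<Sum>s<t. lip ^ s) < \<bar>g x j - (\<Phi> ^^ t) m' j\<bar>}"
  then have near: "\<bar>g x j - (\<Phi> ^^ t) m' j\<bar> \<le> \<delta> * (\<Sum>s<t. lip ^ s)" using j by (auto simp: not_less)
  have "\<bar>(\<Phi> ^^ t) m' j - (\<Phi> ^^ t) (\<Phi> m) j\<bar> \<le> lip ^ t * \<delta>"
    using funpow_phi_lipschitz[OF m' phi_simplex[OF m] close \<open>0 \<le> \<delta>\<close> j] .
  moreover have "(\<Phi> ^^ Suc t) m = (\<Phi> ^^ t) (\<Phi> m)" by (simp only: funpow_Suc_right o_apply)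
  ultimately show False using near far by (simp add: algebra_simps)
qed

text \<open>\<open>t\<close> steps of the chain follow \<open>t\<close> iterates of \<open>phi\<close> up to \<open>\<delta> (1 + lip + \<dots> + lip^(t-1))\<close>:
  each step adds a fluctuation \<open>\<delta>\<close>, and earlier fluctuations are amplified by \<open>lip\<close>.\<close>
lemma kernel_iter_deviation:
  assumes N: "0 < N" and A: "real A = \<alpha> * real N" and n: "n \<in> config_space d N"
    and \<delta>: "0 < \<delta>" "\<delta> \<le> 2"
  shows "measure_pmf.prob (kernel_iter (wip_step d P0 P1 A) t n)
      {x. \<exists>j\<in>{1..d}. \<delta> * (\<Sum>s<t. lip ^ s) < \<bar>frac N x j - (\<Phi> ^^ t) (frac N n) j\<bar>}
    \<le> real t * (real d * (2 * exp (- (\<delta>\<^sup>2 * real N / 4))))"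
  using n
proof (induction t arbitrary: n)
  case (Suc t)
  let ?K = "wip_step d P0 P1 A" and ?B = "real d * (2 * exp (- (\<delta>\<^sup>2 * real N / 4)))"
  let ?Bad = "\<lambda>t m. {x. \<exists>j\<in>{1..d}. \<delta> * (\<Sum>s<t. lip ^ s) < \<bar>frac N x j - (\<Phi> ^^ t) m j\<bar>}"
  define G where "G = {y. \<exists>j\<in>{1..d}. \<delta> < \<bar>frac N y j - \<Phi> (frac N n) j\<bar>}"
  have "measure_pmf.prob (kernel_iter ?K t y) (?Bad (Suc t) (frac N n)) \<le> real t * ?B"
    if y: "y \<in> set_pmf (?K n)" and "y \<notin> G" for y
  proof -
    have yc: "y \<in> config_space d N" using set_pmf_wip_step[OF Suc.prems] y by blast
    have "\<forall>k\<in>{1..d}. \<bar>frac N y k - \<Phi> (frac N n) k\<bar> \<le> \<delta>"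
      using \<open>y \<notin> G\<close> by (auto simp: G_def not_less)
    then have "?Bad (Suc t) (frac N n) \<subseteq> ?Bad t (frac N y)"
      using \<delta> by (intro deviation_set_Suc_subset frac_simplex N Suc.prems yc) auto
    then have "measure_pmf.prob (kernel_iter ?K t y) (?Bad (Suc t) (frac N n))
        \<le> measure_pmf.prob (kernel_iter ?K t y) (?Bad t (frac N y))"
      by (intro measure_pmf.finite_measure_mono) auto
    also have "\<dots> \<le> real t * ?B" using Suc.IH[OF yc] .
    finally show ?thesis .
  qed
  moreover have "finite (set_pmf (kernel_iter ?K t y))" if "y \<in> set_pmf (?K n)" for y
    using set_pmf_wip_step[OF Suc.prems] that by (intro finite_set_pmf_kernel_iter_wip_step) blast
  ultimately have "measure_pmf.prob (bind_pmf (?K n) (kernel_iter ?K t)) (?Bad (Suc t) (frac N n))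
      \<le> measure_pmf.prob (?K n) G + real t * ?B"
    using finite_set_pmf_wip_step[OF Suc.prems] by (intro prob_bind_pmf_le) auto
  moreover have "measure_pmf.prob (?K n) G \<le> ?B"
    unfolding G_def by (rule wip_step_deviation[OF N A Suc.prems \<delta>])
  ultimately show ?case by (simp add: algebra_simps)
qed simp

lemma kernel_iter_far_from_fixed_point:
  assumes attract: "\<forall>m\<in>simplex_d d. \<forall>i\<in>{1..d}. \<bar>(\<Phi> ^^ T) m i - mstar i\<bar> \<le> \<epsilon> / 2"
    and \<delta>: "0 < \<delta>" "\<delta> \<le> 2" "\<delta> * (\<Sum>s<T. lip ^ s) \<le> \<epsilon> / 2"
    and N: "0 < N" and A: "real A = \<alpha> * real N" and n: "n \<in> config_space d N"
  shows "measure_pmf.prob (kernel_iter (wip_step d P0 P1 A) T n)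
      {x. \<exists>j\<in>{1..d}. \<epsilon> < \<bar>frac N x j - mstar j\<bar>}
    \<le> real T * (real d * (2 * exp (- (\<delta>\<^sup>2 * real N / 4))))"
proof -
  have "{x. \<exists>j\<in>{1..d}. \<epsilon> < \<bar>frac N x j - mstar j\<bar>}
      \<subseteq> {x. \<exists>j\<in>{1..d}. \<delta> * (\<Sum>s<T. lip ^ s) < \<bar>frac N x j - (\<Phi> ^^ T) (frac N n) j\<bar>}"
  proof
    fix x assume "x \<in> {x. \<exists>j\<in>{1..d}. \<epsilon> < \<bar>frac N x j - mstar j\<bar>}"
    then obtain j where j: "j \<in> {1..d}" and far: "\<epsilon> < \<bar>frac N x j - mstar j\<bar>" by blast
    have "\<bar>(\<Phi> ^^ T) (frac N n) j - mstar j\<bar> \<le> \<epsilon> / 2" using attract frac_simplex[OF N n] j by blast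
    then have "\<delta> * (\<Sum>s<T. lip ^ s) < \<bar>frac N x j - (\<Phi> ^^ T) (frac N n) j\<bar>" using far \<delta>(3) by linarith
    then show "x \<in> {x. \<exists>j\<in>{1..d}. \<delta> * (\<Sum>s<T. lip ^ s) < \<bar>frac N x j - (\<Phi> ^^ T) (frac N n) j\<bar>}"
      using j by blast
  qed
  then have "measure_pmf.prob (kernel_iter (wip_step d P0 P1 A) T n)
      {x. \<exists>j\<in>{1..d}. \<epsilon> < \<bar>frac N x j - mstar j\<bar>}
    \<le> measure_pmf.prob (kernel_iter (wip_step d P0 P1 A) T n)
      {x. \<exists>j\<in>{1..d}. \<delta> * (\<Sum>s<T. lip ^ s) < \<bar>frac N x j - (\<Phi> ^^ T) (frac N n) j\<bar>}"
    by (intro measure_pmf.finite_measure_mono) auto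
  also have "\<dots> \<le> real T * (real d * (2 * exp (- (\<delta>\<^sup>2 * real N / 4))))"
    by (rule kernel_iter_deviation[OF N A n \<delta>(1,2)])
  finally show ?thesis .
qed
end

section \<open>Stationary configurations\<close>

lemma expectation_frac_simplex:
  assumes N: "0 < N" and supp: "set_pmf \<mu> \<subseteq> config_space d N"
  shows "(\<lambda>j. measure_pmf.expectation \<mu> (\<lambda>x. frac N x j)) \<in> simplex_d d"
proof (rule simplexI)
  have fin: "finite (set_pmf \<mu>)" using supp finite_config_space finite_subset by blast
  show "\<forall>j\<in>{1..d}. 0 \<le> measure_pmf.expectation \<mu> (\<lambda>x. frac N x j)"
    by (auto intro!: integral_nonneg_AE simp: frac_def)
  have "(\<Sum>j=1..d. measure_pmf.expectation \<mu> (\<lambda>x. frac N x j))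
      = measure_pmf.expectation \<mu> (\<lambda>x. \<Sum>j=1..d. frac N x j)"
    using fin by (simp add: Bochner_Integration.integral_sum integrable_measure_pmf_finite)
  also have "\<dots> = measure_pmf.expectation \<mu> (\<lambda>x. 1)"
    using supp simplex_sum[OF frac_simplex[OF N]] by (intro expectation_cong_pmf) auto
  finally show "(\<Sum>j=1..d. measure_pmf.expectation \<mu> (\<lambda>x. frac N x j)) = 1" by simp
qed

lemma expectation_zone_lin:
  assumes "finite (set_pmf p)"
  shows "measure_pmf.expectation p (\<lambda>x. zone_lin d P0 P1 s (f x) j)
    = zone_lin d P0 P1 s (\<lambda>i. measure_pmf.expectation p (\<lambda>x. f x i)) j"
  using assms
  by (simp add: zone_lin_def Bochner_Integration.integral_sum integrable_measure_pmf_finite)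

context mean_field_model
begin

lemma expectation_frac_wip_step:
  assumes "0 < N" "real A = \<alpha> * real N" "n \<in> config_space d N" "j \<in> {1..d}"
  shows "measure_pmf.expectation (wip_step d P0 P1 A n) (\<lambda>x. frac N x j) = \<Phi> (frac N n) j"
  using subgaussian_wip_step[OF assms] assms(1) by (simp add: subgaussian_pmf_def frac_def)

lemma stationary_expectation_frac:
  assumes N: "0 < N" and A: "real A = \<alpha> * real N" and st: "stationary_wip d P0 P1 N A \<mu>"
    and j: "j \<in> {1..d}"
  shows "measure_pmf.expectation \<mu> (\<lambda>x. frac N x j) = measure_pmf.expectation \<mu> (\<lambda>x. \<Phi> (frac N x) j)"
proof -
  have supp: "set_pmf \<mu> \<subseteq> config_space d N" and inv: "bind_pmf \<mu> (wip_step d P0 P1 A) = \<mu>"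
    using st by (auto simp: stationary_wip_def)
  have fin: "finite (set_pmf \<mu>)" using supp finite_config_space finite_subset by blast
  have "measure_pmf.expectation \<mu> (\<lambda>x. frac N x j)
      = measure_pmf.expectation (bind_pmf \<mu> (wip_step d P0 P1 A)) (\<lambda>x. frac N x j)"
    using inv by simp
  also have "\<dots> = measure_pmf.expectation \<mu>
      (\<lambda>n. measure_pmf.expectation (wip_step d P0 P1 A n) (\<lambda>x. frac N x j))"
    using fin supp by (intro expectation_bind_pmf_finite finite_set_pmf_wip_step) auto
  also have "\<dots> = measure_pmf.expectation \<mu> (\<lambda>x. \<Phi> (frac N x) j)"
    using supp by (intro expectation_cong_pmf expectation_frac_wip_step[OF N A _ j]) auto
  finally show ?thesis .
qed

end

context mean_field_attractor
begin

text \<open>A stationary configuration has the law of the chain \<open>T\<close> steps after a stationary start,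
  where \<open>T\<close> is an attraction time of \<open>phi\<close> for \<open>\<epsilon> / 2\<close>.\<close>
lemma stationary_concentration:
  assumes \<epsilon>: "0 < \<epsilon>"
  obtains b c where "0 < b" "0 < c"
    "\<forall>N A \<mu>. 0 < N \<longrightarrow> real A = \<alpha> * real N \<longrightarrow> stationary_wip d P0 P1 N A \<mu> \<longrightarrow>
       measure_pmf.prob \<mu> {x. \<exists>j\<in>{1..d}. \<epsilon> < \<bar>frac N x j - mstar j\<bar>} \<le> b * exp (- c * real N)"
proof -
  obtain T where T: "\<forall>t\<ge>T. \<forall>m\<in>simplex_d d. \<forall>i\<in>{1..d}. \<bar>(\<Phi> ^^ t) m i - mstar i\<bar> \<le> \<epsilon> / 2"
    using attractorE[of "\<epsilon> / 2"] \<epsilon> by auto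
  define S where "S = (\<Sum>s<T. lip ^ s)"
  define \<delta> where "\<delta> = min 2 (\<epsilon> / (2 * (S + 1)))"
  define b where "b = real T * (real d * 2) + 1"
  define c where "c = \<delta>\<^sup>2 / 4"
  have S: "0 \<le> S" by (simp add: S_def sum_nonneg)
  then have \<delta>: "0 < \<delta>" "\<delta> \<le> 2" using \<epsilon> by (auto simp: \<delta>_def)
  have "\<delta> * S \<le> \<epsilon> / (2 * (S + 1)) * S" using S by (intro mult_right_mono) (auto simp: \<delta>_def)
  also have "\<dots> \<le> \<epsilon> / 2" using S \<epsilon> by (simp add: field_simps)
  finally have \<delta>S: "\<delta> * S \<le> \<epsilon> / 2" .
  have "measure_pmf.prob \<mu> {x. \<exists>j\<in>{1..d}. \<epsilon> < \<bar>frac N x j - mstar j\<bar>} \<le> b * exp (- c * real N)"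
    if N: "0 < N" and A: "real A = \<alpha> * real N" and st: "stationary_wip d P0 P1 N A \<mu>" for N A \<mu>
  proof -
    let ?K = "wip_step d P0 P1 A" and ?Bad = "{x. \<exists>j\<in>{1..d}. \<epsilon> < \<bar>frac N x j - mstar j\<bar>}"
    have supp: "set_pmf \<mu> \<subseteq> config_space d N" and inv: "bind_pmf \<mu> ?K = \<mu>"
      using st by (auto simp: stationary_wip_def)
    have "measure_pmf.prob (kernel_iter ?K T n) ?Bad \<le> real T * (real d * 2) * exp (- c * real N)"
      if "n \<in> set_pmf \<mu>" for n
    proof -
      have "\<forall>m\<in>simplex_d d. \<forall>i\<in>{1..d}. \<bar>(\<Phi> ^^ T) m i - mstar i\<bar> \<le> \<epsilon> / 2" using T by blast
      moreover have "n \<in> config_space d N" using supp that by blast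
      ultimately have "measure_pmf.prob (kernel_iter ?K T n) ?Bad
          \<le> real T * (real d * (2 * exp (- (\<delta>\<^sup>2 * real N / 4))))"
        by (rule kernel_iter_far_from_fixed_point[OF _ \<delta> \<delta>S[unfolded S_def] N A])
      then show ?thesis by (simp add: c_def algebra_simps)
    qed
    then have "measure_pmf.prob (bind_pmf \<mu> (kernel_iter ?K T)) ?Bad
        \<le> measure_pmf.prob \<mu> {} + real T * (real d * 2) * exp (- c * real N)"
      using supp finite_subset[OF supp finite_config_space]
      by (intro prob_bind_pmf_le finite_set_pmf_kernel_iter_wip_step) auto
    then have "measure_pmf.prob \<mu> ?Bad \<le> real T * (real d * 2) * exp (- c * real N)"
      by (simp add: bind_kernel_iter_stationary[OF inv])
    also have "\<dots> \<le> b * exp (- c * real N)" by (intro mult_right_mono) (simp_all add: b_def)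
    finally show ?thesis .
  qed
  moreover have "0 < b" "0 < c" using \<delta> by (simp_all add: b_def c_def add_nonneg_pos)
  ultimately show ?thesis using that by blast
qed

lemma prob_outside_zone_le:
  assumes zone: "\<forall>m\<in>simplex_d d. (\<forall>i\<in>{1..d}. \<bar>m i - mstar i\<bar> \<le> \<rho>) \<longrightarrow> s_of d \<alpha> m = sstar"
    and N: "0 < N" and supp: "set_pmf \<mu> \<subseteq> config_space d N"
  shows "measure_pmf.prob \<mu> {x. frac N x \<notin> Z d \<alpha> sstar}
    \<le> measure_pmf.prob \<mu> {x. \<exists>j\<in>{1..d}. \<rho> < \<bar>frac N x j - mstar j\<bar>}"
proof -
  have "{x. frac N x \<notin> Z d \<alpha> sstar} \<inter> set_pmf \<mu> \<subseteq> {x. \<exists>j\<in>{1..d}. \<rho> < \<bar>frac N x j - mstar j\<bar>}"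
  proof
    fix x assume x: "x \<in> {x. frac N x \<notin> Z d \<alpha> sstar} \<inter> set_pmf \<mu>"
    then have simplex: "frac N x \<in> simplex_d d" using supp frac_simplex[OF N] by blast
    show "x \<in> {x. \<exists>j\<in>{1..d}. \<rho> < \<bar>frac N x j - mstar j\<bar>}"
    proof (rule ccontr)
      assume "x \<notin> {x. \<exists>j\<in>{1..d}. \<rho> < \<bar>frac N x j - mstar j\<bar>}"
      then have "s_of d \<alpha> (frac N x) = sstar" using zone simplex by (auto simp: not_less)
      then show False using x simplex by (simp add: Z_def)
    qed
  qed
  then have "measure_pmf.prob \<mu> ({x. frac N x \<notin> Z d \<alpha> sstar} \<inter> set_pmf \<mu>)
      \<le> measure_pmf.prob \<mu> {x. \<exists>j\<in>{1..d}. \<rho> < \<bar>frac N x j - mstar j\<bar>}"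
    by (intro measure_pmf.finite_measure_mono) auto
  then show ?thesis by (simp add: measure_Int_set_pmf)
qed

lemma stationary_zone_error:
  assumes N: "0 < N" and supp: "set_pmf \<mu> \<subseteq> config_space d N" and j: "j \<in> {1..d}"
  shows "\<bar>measure_pmf.expectation \<mu> (\<lambda>x. \<Phi> (frac N x) j - (mstar j + Lstar (\<lambda>i. frac N x i - mstar i) j))\<bar>
    \<le> (4 * real d + 2) * measure_pmf.prob \<mu> {x. frac N x \<notin> Z d \<alpha> sstar}"
proof -
  have fin: "finite (set_pmf \<mu>)" using supp finite_config_space finite_subset by blast
  have "\<bar>measure_pmf.expectation \<mu> (\<lambda>x. \<Phi> (frac N x) j - (mstar j + Lstar (\<lambda>i. frac N x i - mstar i) j))\<bar>
      \<le> measure_pmf.expectation \<mu> (\<lambda>x. (4 * real d + 2) * indicator {x. frac N x \<notin> Z d \<alpha> sstar} x)"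
  proof (rule abs_expectation_le_pmf_finite[OF fin])
    fix x assume "x \<in> set_pmf \<mu>"
    then have "frac N x \<in> simplex_d d" using supp frac_simplex[OF N] by blast
    then show "\<bar>\<Phi> (frac N x) j - (mstar j + Lstar (\<lambda>i. frac N x i - mstar i) j)\<bar>
        \<le> (4 * real d + 2) * indicator {x. frac N x \<notin> Z d \<alpha> sstar} x"
      by (rule order_trans[OF phi_zone_error[OF _ j]]) (simp add: Z_def)
  qed
  then show ?thesis by simp
qed

lemma stationary_mean_deviation:
  obtains C where "0 \<le> C"
    "\<forall>N A \<mu>. 0 < N \<longrightarrow> real A = \<alpha> * real N \<longrightarrow> stationary_wip d P0 P1 N A \<mu> \<longrightarrow>
       (\<forall>j\<in>{1..d}. \<bar>measure_pmf.expectation \<mu> (\<lambda>x. frac N x j) - mstar j\<bar>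
          \<le> C * measure_pmf.prob \<mu> {x. frac N x \<notin> Z d \<alpha> sstar})"
proof -
  obtain C0 where C0: "0 \<le> C0" and perturbation: "\<forall>w err E. feasible_direction d mstar w
      \<longrightarrow> (\<forall>j\<in>{1..d}. w j = Lstar w j + err j) \<longrightarrow> (\<forall>j\<in>{1..d}. \<bar>err j\<bar> \<le> E)
      \<longrightarrow> (\<forall>j\<in>{1..d}. \<bar>w j\<bar> \<le> C0 * E)"
    by (rule zone_lin_perturbation_bound)
  have "\<forall>j\<in>{1..d}. \<bar>measure_pmf.expectation \<mu> (\<lambda>x. frac N x j) - mstar j\<bar>
      \<le> C0 * ((4 * real d + 2) * measure_pmf.prob \<mu> {x. frac N x \<notin> Z d \<alpha> sstar})"
    if N: "0 < N" and A: "real A = \<alpha> * real N" and st: "stationary_wip d P0 P1 N A \<mu>" for N A \<mu>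
  proof -
    define mean where "mean = (\<lambda>j. measure_pmf.expectation \<mu> (\<lambda>x. frac N x j))"
    define err where "err = (\<lambda>j. measure_pmf.expectation \<mu>
      (\<lambda>x. \<Phi> (frac N x) j - (mstar j + Lstar (\<lambda>i. frac N x i - mstar i) j)))"
    have supp: "set_pmf \<mu> \<subseteq> config_space d N" using st by (simp add: stationary_wip_def)
    have fin: "finite (set_pmf \<mu>)" using supp finite_config_space finite_subset by blast
    have "mean j - mstar j = Lstar (\<lambda>i. mean i - mstar i) j + err j" if j: "j \<in> {1..d}" for j
    proof -
      have "mean j = measure_pmf.expectation \<mu> (\<lambda>x. mstar j + Lstar (\<lambda>i. frac N x i - mstar i) j) + err j"
        using stationary_expectation_frac[OF N A st j] fin
        by (simp add: mean_def err_def integrable_measure_pmf_finite)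
      also have "measure_pmf.expectation \<mu> (\<lambda>x. mstar j + Lstar (\<lambda>i. frac N x i - mstar i) j)
          = mstar j + Lstar (\<lambda>i. mean i - mstar i) j"
        using fin by (simp add: expectation_add_pmf_finite expectation_zone_lin mean_def
            integrable_measure_pmf_finite)
      finally show ?thesis by simp
    qed
    moreover have "feasible_direction d mstar (\<lambda>i. mean i - mstar i)"
      unfolding mean_def by (rule feasible_direction_diff[OF expectation_frac_simplex[OF N supp] mstar_simplex])
    moreover have "\<forall>j\<in>{1..d}. \<bar>err j\<bar> \<le> (4 * real d + 2) * measure_pmf.prob \<mu> {x. frac N x \<notin> Z d \<alpha> sstar}"
      unfolding err_def using stationary_zone_error[OF N supp] by blast
    ultimately show ?thesis using perturbation unfolding mean_def by blast
  qed
  then show ?thesis using that[of "C0 * (4 * real d + 2)"] C0 by (simp add: mult.assoc)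
qed

lemma stationary_outside_zone_exponential:
  obtains b c where "0 < b" "0 < c"
    "\<forall>N A \<mu>. 0 < N \<longrightarrow> real A = \<alpha> * real N \<longrightarrow> stationary_wip d P0 P1 N A \<mu> \<longrightarrow>
       measure_pmf.prob \<mu> {n. frac N n \<notin> Z d \<alpha> sstar} \<le> b * exp (- c * real N)"
proof -
  obtain \<rho> where \<rho>: "0 < \<rho>"
    and zone: "\<forall>m\<in>simplex_d d. (\<forall>i\<in>{1..d}. \<bar>m i - mstar i\<bar> \<le> \<rho>) \<longrightarrow> s_of d \<alpha> m = sstar"
    by (rule zone_nbhd)
  obtain b c where "0 < b" "0 < c" and concentration:
    "\<forall>N A \<mu>. 0 < N \<longrightarrow> real A = \<alpha> * real N \<longrightarrow> stationary_wip d P0 P1 N A \<mu> \<longrightarrow>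
       measure_pmf.prob \<mu> {x. \<exists>j\<in>{1..d}. \<rho> < \<bar>frac N x j - mstar j\<bar>} \<le> b * exp (- c * real N)"
    by (rule stationary_concentration[OF \<rho>])
  have "measure_pmf.prob \<mu> {n. frac N n \<notin> Z d \<alpha> sstar} \<le> b * exp (- c * real N)"
    if N: "0 < N" and A: "real A = \<alpha> * real N" and st: "stationary_wip d P0 P1 N A \<mu>" for N A \<mu>
  proof -
    have "set_pmf \<mu> \<subseteq> config_space d N" using st by (simp add: stationary_wip_def)
    from prob_outside_zone_le[OF zone N this] concentration[rule_format, OF N A st]
    show ?thesis by (rule order_trans)
  qed
  then show ?thesis using that \<open>0 < b\<close> \<open>0 < c\<close> by blast
qed

theorem stationary_exponential_bounds:
  obtains b c where "0 < b" "0 < c"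
    "\<forall>N A \<mu>. N > 0 \<longrightarrow> real A = \<alpha> * real N \<longrightarrow> stationary_wip d P0 P1 N A \<mu> \<longrightarrow>
       (\<forall>i\<in>{1..d}. \<bar>measure_pmf.expectation \<mu> (\<lambda>n. frac N n i) - mstar i\<bar> \<le> b * exp (- c * real N))
     \<and> measure_pmf.prob \<mu> {n. frac N n \<notin> Z d \<alpha> sstar} \<le> b * exp (- c * real N)"
proof -
  obtain b c where b: "0 < b" and c: "0 < c" and outside:
    "\<forall>N A \<mu>. 0 < N \<longrightarrow> real A = \<alpha> * real N \<longrightarrow> stationary_wip d P0 P1 N A \<mu> \<longrightarrow>
       measure_pmf.prob \<mu> {n. frac N n \<notin> Z d \<alpha> sstar} \<le> b * exp (- c * real N)"
    by (rule stationary_outside_zone_exponential)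
  obtain C where C: "0 \<le> C" and mean: "\<forall>N A \<mu>. 0 < N \<longrightarrow> real A = \<alpha> * real N \<longrightarrow>
      stationary_wip d P0 P1 N A \<mu> \<longrightarrow> (\<forall>j\<in>{1..d}. \<bar>measure_pmf.expectation \<mu> (\<lambda>x. frac N x j) - mstar j\<bar>
        \<le> C * measure_pmf.prob \<mu> {x. frac N x \<notin> Z d \<alpha> sstar})"
    by (rule stationary_mean_deviation)
  have "\<forall>N A \<mu>. N > 0 \<longrightarrow> real A = \<alpha> * real N \<longrightarrow> stationary_wip d P0 P1 N A \<mu> \<longrightarrow>
       (\<forall>i\<in>{1..d}. \<bar>measure_pmf.expectation \<mu> (\<lambda>n. frac N n i) - mstar i\<bar> \<le> (C + 1) * b * exp (- c * real N))
     \<and> measure_pmf.prob \<mu> {n. frac N n \<notin> Z d \<alpha> sstar} \<le> (C + 1) * b * exp (- c * real N)"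
  proof (intro allI impI)
    fix N A \<mu> assume N: "N > 0" and A: "real A = \<alpha> * real N" and st: "stationary_wip d P0 P1 N A \<mu>"
    let ?e = "b * exp (- c * real N)" and ?P = "measure_pmf.prob \<mu> {n. frac N n \<notin> Z d \<alpha> sstar}"
    have P: "?P \<le> ?e" by (rule outside[rule_format, OF N A st])
    have "C * ?P \<le> C * ?e" using P C by (rule mult_left_mono)
    moreover have "0 \<le> ?e" "0 \<le> C * ?e" using b C by simp_all
    moreover have "(C + 1) * b * exp (- c * real N) = C * ?e + ?e" by (simp add: algebra_simps)
    ultimately have CP: "C * ?P \<le> (C + 1) * b * exp (- c * real N)"
      and "?P \<le> (C + 1) * b * exp (- c * real N)" using P by linarith+
    moreover have "\<forall>i\<in>{1..d}. \<bar>measure_pmf.expectation \<mu> (\<lambda>n. frac N n i) - mstar i\<bar>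
        \<le> (C + 1) * b * exp (- c * real N)"
      using order_trans[OF mean[rule_format, OF N A st] CP] by blast
    ultimately show "(\<forall>i\<in>{1..d}. \<bar>measure_pmf.expectation \<mu> (\<lambda>n. frac N n i) - mstar i\<bar>
        \<le> (C + 1) * b * exp (- c * real N)) \<and> ?P \<le> (C + 1) * b * exp (- c * real N)" by blast
  qed
  moreover have "0 < (C + 1) * b" using b C by simp
  ultimately show ?thesis using that c by blast
qed

end

theorem mainTheorem10:
  fixes d :: nat and P0 P1 :: "nat \<Rightarrow> nat \<Rightarrow> real" and R0 R1 :: "nat \<Rightarrow> real"
    and \<alpha> :: real and mstar :: "nat \<Rightarrow> real"
  assumes "d \<ge> 1"
    and "stochastic d P0" and "stochastic d P1"
    and "0 < \<alpha>" and "\<alpha> < 1"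
    and "unichain d P0 P1"
    and "strictly_indexable_sorted d P0 P1 R0 R1"
    and "mstar \<in> simplex_d d"
    and "\<forall>j\<in>{1..d}. phi d P0 P1 \<alpha> mstar j = mstar j"
    and "\<forall>m\<in>simplex_d d. (\<forall>j\<in>{1..d}. phi d P0 P1 \<alpha> m j = m j) \<longrightarrow> (\<forall>j\<in>{1..d}. m j = mstar j)"
    and "uniform_global_attractor d (phi d P0 P1 \<alpha>) mstar"
    and "\<not> singular d \<alpha> mstar"
  shows "\<exists>b c. b > 0 \<and> c > 0 \<and>
    (\<forall>N A \<mu>. N > 0 \<longrightarrow> real A = \<alpha> * real N \<longrightarrow> stationary_wip d P0 P1 N A \<mu> \<longrightarrow>
       (\<forall>i\<in>{1..d}. \<bar>measure_pmf.expectation \<mu> (\<lambda>n. frac N n i) - mstar i\<bar> \<le> b * exp (- c * real N))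
     \<and> measure_pmf.prob \<mu> {n. frac N n \<notin> Z d \<alpha> (s_of d \<alpha> mstar)} \<le> b * exp (- c * real N))"
proof -
  interpret mean_field_attractor d P0 P1 \<alpha> mstar
    using assms(2-5,8,9,11,12) by unfold_locales auto
  obtain b c where "0 < b" "0 < c"
    and "\<forall>N A \<mu>. N > 0 \<longrightarrow> real A = \<alpha> * real N \<longrightarrow> stationary_wip d P0 P1 N A \<mu> \<longrightarrow>
       (\<forall>i\<in>{1..d}. \<bar>measure_pmf.expectation \<mu> (\<lambda>n. frac N n i) - mstar i\<bar> \<le> b * exp (- c * real N))
     \<and> measure_pmf.prob \<mu> {n. frac N n \<notin> Z d \<alpha> sstar} \<le> b * exp (- c * real N)"
    by (rule stationary_exponential_bounds)
  then show ?thesis by blast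
qed

end
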